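(* Let $\lambda>0$. (a) If $0<p<\infty$ and $w\in\widetilde A_{\infty,\lambda-\frac12}$, then ${\rm BMO}_{\triangle_\lambda}(\mathbb R_+)\hookrightarrow{\rm BMO}_{L^p(w)}(\mathbb R_+)$; i.e. $\|b\|_{{\rm BMO}_{L^p(w)}}\le C\|b\|_{{\rm BMO}_{\triangle_\lambda}}$ with $C$ depending on $p,w,\lambda$. (b) If $1\le p<\infty$ and $w\in\widetilde A_{p,\lambda-\frac12}$, then ${\rm BMO}_{L^p(w)}(\mathbb R_+)\hookrightarrow{\rm BMO}_{\triangle_\lambda}(\mathbb R_+)$; i.e. $\|b\|_{{\rm BMO}_{\triangle_\lambda}}\le C\|b\|_{{\rm BMO}_{L^p(w)}}$ with $C$ depending on $p,w,\lambda$.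
   Context: On $\mathbb R_+=(0,\infty)$, $d\mu(x)=x^{2\lambda}dx$; intervals are $B=(a,b)\subset\mathbb R_+$; $w(E)=\int_Ew\,dx$; $p'=p/(p-1)$; $f_B=\frac1{\mu(B)}\int_Bf\,d\mu$. Weights: for $1<p<\infty$, $w\in\widetilde A_{p,\lambda-\frac12}$ if $\sup_B\big(\frac1{\mu(B)}\int_Bw\,dt\big)\big(\frac1{\mu(B)}\int_Bt^{2\lambda p'}w^{-\frac1{p-1}}dt\big)^{p-1}<\infty$; $w\in\widetilde A_{1,\lambda-\frac12}$ if there is $C$ with $\frac{w(B)}{\mu(B)}\le C\frac{w(x)}{x^{2\lambda}}$ for a.e. $x\in B$, all intervals $B$; $\widetilde A_{\infty,\lambda-\frac12}=\bigcup_{p\ge1}\widetilde A_{p,\lambda-\frac12}$. ${\rm BMO}_{\triangle_\lambda}(\mathbb R_+)$: $f\in L^1_{loc}(\mu)$ with $\|f\|_{{\rm BMO}_{\triangle_\lambda}}=\sup_B\frac1{\mu(B)}\int_B|f-f_B|d\mu<\infty$. ${\rm BMO}_{L^p(w)}(\mathbb R_+)$: $f\in L^1_{loc}(w\,dx)$ with $\|f\|_{{\rm BMO}_{L^p(w)}}=\sup_B\big(\frac1{w(B)}\int_B|f(t)-f_B|^pw(t)dt\big)^{1/p}<\infty$. *)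

theory Defs
  imports "HOL-Analysis.Analysis"
begin

(* Setting: R_+ = (0,inf), d mu(x) = x^(2 lam) dx.  Intervals B = (a,b) with 0 <= a < b < inf. *)

definition epowr :: "ennreal \<Rightarrow> real \<Rightarrow> ennreal" where
  "epowr x r = (if x = \<infinity> then \<infinity> else ennreal (enn2real x powr r))"

definition mu_meas :: "real \<Rightarrow> real \<Rightarrow> real \<Rightarrow> ennreal" where
  "mu_meas lam a b = (\<integral>\<^sup>+ t\<in>{a<..<b}. ennreal (t powr (2*lam)) \<partial>lborel)"

definition w_meas :: "(real \<Rightarrow> real) \<Rightarrow> real \<Rightarrow> real \<Rightarrow> ennreal" where
  "w_meas w a b = (\<integral>\<^sup>+ t\<in>{a<..<b}. ennreal (w t) \<partial>lborel)"

definition mu_avg :: "real \<Rightarrow> (real \<Rightarrow> real) \<Rightarrow> real \<Rightarrow> real \<Rightarrow> real" where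
  "mu_avg lam f a b = (LINT t:{a<..<b}|lborel. f t * t powr (2*lam)) / enn2real (mu_meas lam a b)"

definition is_weight :: "(real \<Rightarrow> real) \<Rightarrow> bool" where
  "is_weight w \<longleftrightarrow> w \<in> borel_measurable lborel \<and>
     (AE t in lborel. 0 < t \<longrightarrow> 0 < w t) \<and>
     (\<forall>a b. 0 < a \<longrightarrow> a < b \<longrightarrow> set_integrable lborel {a<..<b} w)"

definition Ap_tilde :: "real \<Rightarrow> real \<Rightarrow> (real \<Rightarrow> real) \<Rightarrow> bool" where
  "Ap_tilde lam p w \<longleftrightarrow>
     (\<exists>C. \<forall>a b. 0 \<le> a \<longrightarrow> a < b \<longrightarrow>
        w_meas w a b < \<infinity> \<and>
        (\<integral>\<^sup>+ t\<in>{a<..<b}. ennreal (t powr (2*lam*(p/(p-1))) * w t powr (-1/(p-1))) \<partial>lborel) < \<infinity> \<and>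
        (enn2real (w_meas w a b) / enn2real (mu_meas lam a b)) *
        (enn2real (\<integral>\<^sup>+ t\<in>{a<..<b}. ennreal (t powr (2*lam*(p/(p-1))) * w t powr (-1/(p-1))) \<partial>lborel)
           / enn2real (mu_meas lam a b)) powr (p - 1) \<le> C)"

definition A1_tilde :: "real \<Rightarrow> (real \<Rightarrow> real) \<Rightarrow> bool" where
  "A1_tilde lam w \<longleftrightarrow>
     (\<exists>C. \<forall>a b. 0 \<le> a \<longrightarrow> a < b \<longrightarrow>
        (AE x in lborel. x \<in> {a<..<b} \<longrightarrow>
           w_meas w a b / mu_meas lam a b \<le> ennreal (C * w x / x powr (2*lam))))"

definition A_tilde :: "real \<Rightarrow> real \<Rightarrow> (real \<Rightarrow> real) \<Rightarrow> bool" where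
  "A_tilde lam p w = (if p = 1 then A1_tilde lam w else Ap_tilde lam p w)"

definition Ainf_tilde :: "real \<Rightarrow> (real \<Rightarrow> real) \<Rightarrow> bool" where
  "Ainf_tilde lam w \<longleftrightarrow> (\<exists>p\<ge>1. A_tilde lam p w)"

definition bmo_delta_norm :: "real \<Rightarrow> (real \<Rightarrow> real) \<Rightarrow> ennreal" where
  "bmo_delta_norm lam f =
     (SUP B\<in>{(a,b). 0 \<le> a \<and> a < b}.
        (\<integral>\<^sup>+ t\<in>{fst B<..<snd B}. ennreal (\<bar>f t - mu_avg lam f (fst B) (snd B)\<bar> * t powr (2*lam)) \<partial>lborel)
          / mu_meas lam (fst B) (snd B))"

definition BMO_delta :: "real \<Rightarrow> (real \<Rightarrow> real) \<Rightarrow> bool" where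
  "BMO_delta lam f \<longleftrightarrow> f \<in> borel_measurable lborel \<and>
     (\<forall>a b. 0 < a \<longrightarrow> a < b \<longrightarrow> set_integrable lborel {a<..<b} (\<lambda>t. f t * t powr (2*lam))) \<and>
     bmo_delta_norm lam f < \<infinity>"

(* BMO_{L^p(w)} norm (f_B is the mu-average, as in the paper) *)
definition bmo_Lpw_norm :: "real \<Rightarrow> real \<Rightarrow> (real \<Rightarrow> real) \<Rightarrow> (real \<Rightarrow> real) \<Rightarrow> ennreal" where
  "bmo_Lpw_norm lam p w f =
     (SUP B\<in>{(a,b). 0 \<le> a \<and> a < b}.
        epowr ((\<integral>\<^sup>+ t\<in>{fst B<..<snd B}. ennreal (\<bar>f t - mu_avg lam f (fst B) (snd B)\<bar> powr p * w t) \<partial>lborel)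
          / w_meas w (fst B) (snd B)) (1/p))"

definition BMO_Lpw :: "real \<Rightarrow> real \<Rightarrow> (real \<Rightarrow> real) \<Rightarrow> (real \<Rightarrow> real) \<Rightarrow> bool" where
  "BMO_Lpw lam p w f \<longleftrightarrow> f \<in> borel_measurable lborel \<and>
     (\<forall>a b. 0 < a \<longrightarrow> a < b \<longrightarrow> set_integrable lborel {a<..<b} (\<lambda>t. f t * w t)) \<and>
     bmo_Lpw_norm lam p w f < \<infinity>"

end

theory Submission
  imports Defs "HOL-Real_Asymp.Real_Asymp"
begin

text \<open>The measure \<open>\<mu> = x\<^sup>2\<^sup>\<lambda> dx\<close> is doubling on the dyadic subintervals of any interval, so a
  Calder\'on--Zygmund decomposition of \<open>\<bar>b - b\<^sub>I\<bar>\<close> at height \<open>2N\<close> (\<open>N\<close> the BMO norm) is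
  available: the selected intervals cover at most half of \<open>I\<close> in \<open>\<mu>\<close>-measure, their means differ
  from \<open>b\<^sub>I\<close> by \<open>O(N)\<close>, and off them \<open>\<bar>b - b\<^sub>I\<bar> \<le> 3N\<close> almost everywhere.
  Every weight of class \<open>\<tilde>A\<^sub>r\<close> has the \<open>A\<^sub>\<infinity>\<close>-type property that sets of at most half the
  \<open>\<mu>\<close>-measure of \<open>I\<close> carry at most a fixed fraction \<open>\<beta> < 1\<close> of \<open>w(I)\<close> (Holder's
  inequality for \<open>r > 1\<close>, the pointwise bound for \<open>r = 1\<close>). Iterating the decomposition gives the
  weighted John--Nirenberg inequality \<open>w{x \<in> I. \<bar>b - b\<^sub>I\<bar> > c N k} \<le> \<beta>\<^sup>k w(I)\<close>, and summing
  over the layers bounds the \<open>L\<^sup>p(w)\<close> oscillation by \<open>N\<close>, which is (a).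
  For (b), Holder's inequality together with the \<open>\<tilde>A\<^sub>p\<close> condition (the pointwise bound when
  \<open>p = 1\<close>) estimates the \<open>\<mu>\<close>-mean oscillation over \<open>I\<close> by the \<open>L\<^sup>p(w)\<close> mean oscillation.\<close>

lemma summable_powr_times_power:
  assumes q: "0 \<le> q" "q < 1"
  shows "summable (\<lambda>k. (real k + 1) powr p * q^k)"
proof (cases "q = 0")
  case True
  have "summable (\<lambda>k. if k = 0 then (1::real) else 0)" by simp
  moreover have "(\<lambda>k. (real k + 1) powr p * q^k) = (\<lambda>k. if k = 0 then (1::real) else 0)"
    using True by (auto simp: fun_eq_iff)
  ultimately show ?thesis by simp
next
  case False
  hence q0: "0 < q" using q by simp
  define c where "c = (1 + q) / 2"
  have c1: "c < 1" unfolding c_def using q by simp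
  have lim: "(\<lambda>k. ((real k + 2) / (real k + 1)) powr p) \<longlonglongrightarrow> 1" by real_asymp
  have "1 < c / q" unfolding c_def using q q0 by (simp add: field_simps)
  hence "eventually (\<lambda>k. ((real k + 2) / (real k + 1)) powr p < c / q) sequentially"
    using lim by (rule order_tendstoD(2)[rotated])
  then obtain M where M: "\<And>k. k \<ge> M \<Longrightarrow> ((real k + 2) / (real k + 1)) powr p < c / q"
    by (auto simp: eventually_sequentially)
  show ?thesis
  proof (rule summable_ratio_test[OF c1])
    fix k assume k: "k \<ge> M"
    have pos: "0 < real k + 1" by simp
    have e: "(real (Suc k) + 1) powr p = ((real k + 2) / (real k + 1)) powr p * (real k + 1) powr p"
      using pos by (simp add: powr_divide add.commute)
    have "(real (Suc k) + 1) powr p * q^Suc k = (((real k + 2) / (real k + 1)) powr p * q) * ((real k + 1) powr p * q^k)"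
      unfolding e by (simp add: mult_ac)
    also have "\<dots> \<le> c * ((real k + 1) powr p * q^k)"
    proof (rule mult_right_mono)
      show "((real k + 2) / (real k + 1)) powr p * q \<le> c"
        using M[OF k] q0 by (simp add: field_simps)
    qed (use q in simp)
    finally show "norm ((real (Suc k) + 1) powr p * q^Suc k) \<le> c * norm ((real k + 1) powr p * q^k)"
      using q by simp
  qed
qed

definition poly_geom_sum :: "real \<Rightarrow> real \<Rightarrow> real" where
  "poly_geom_sum q p = (\<Sum>k. (real k + 1) powr p * q^k)"

lemma poly_geom_sum_ge_1:
  assumes "0 \<le> q" "q < 1"
  shows "1 \<le> poly_geom_sum q p"
proof -
  have "sum (\<lambda>k. (real k + 1) powr p * q^k) {0} \<le> poly_geom_sum q p"
    unfolding poly_geom_sum_def using summable_powr_times_power[OF assms, of p] assms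
    by (intro sum_le_suminf) auto
  thus ?thesis by simp
qed

lemma ennreal_le_suminf: "f i \<le> (\<Sum>k. f k :: ennreal)"
  using sum_le_suminf[of f "{i}"] by (simp add: summableI)

lemma powr_le_layer_sum:
  assumes c: "0 < c" and G: "0 \<le> G" and p: "0 < p"
  shows "ennreal (G powr p) \<le> (\<Sum>k. ennreal (c powr p * (real k + 1) powr p) * indicator {y. c * real k < y} G)"
proof (cases "G = 0")
  case True thus ?thesis by simp
next
  case False
  hence G0: "0 < G" using G by simp
  define K where "K = \<lceil>G / c\<rceil>"
  have K1: "1 \<le> K" unfolding K_def using G0 c by (simp add: one_le_ceiling)
  define k0 where "k0 = nat (K - 1)"
  have rk: "real k0 = real_of_int K - 1" unfolding k0_def using K1 by simp
  have lt: "c * real k0 < G"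
  proof -
    have "real_of_int K - 1 < G / c" unfolding K_def by linarith
    thus ?thesis unfolding rk using c by (simp add: field_simps)
  qed
  have le: "G \<le> c * (real k0 + 1)"
  proof -
    have "G / c \<le> real_of_int K" unfolding K_def by (rule le_of_int_ceiling)
    thus ?thesis unfolding rk using c by (simp add: field_simps)
  qed
  have "G powr p \<le> (c * (real k0 + 1)) powr p" using le G p by (intro powr_mono2) auto
  also have "\<dots> = c powr p * (real k0 + 1) powr p" using c by (simp add: powr_mult)
  finally have "ennreal (G powr p) \<le> ennreal (c powr p * (real k0 + 1) powr p) * indicator {y. c * real k0 < y} G"
    using lt by (simp add: ennreal_leI)
  also have "\<dots> \<le> (\<Sum>k. ennreal (c powr p * (real k + 1) powr p) * indicator {y. c * real k < y} G)"
    by (rule ennreal_le_suminf[where f="\<lambda>k. ennreal (c powr p * (real k + 1) powr p) * indicator {y. c * real k < y} G"])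
  finally show ?thesis .
qed

lemma nn_integral_powr_le_layer_sum:
  assumes c: "0 < c" and p: "0 < p"
    and G[measurable]: "G \<in> borel_measurable M" "\<And>x. 0 \<le> G x" and I[measurable]: "I \<in> sets M"
  shows "(\<integral>\<^sup>+x. ennreal (G x powr p) * indicator I x \<partial>M)
    \<le> (\<Sum>k. ennreal (c powr p * (real k + 1) powr p) * emeasure M {x\<in>I. c * real k < G x})"
proof -
  have "(\<integral>\<^sup>+x. ennreal (G x powr p) * indicator I x \<partial>M)
      \<le> (\<integral>\<^sup>+x. (\<Sum>k. ennreal (c powr p * (real k + 1) powr p) * indicator {x\<in>I. c * real k < G x} x) \<partial>M)"
  proof (intro nn_integral_mono)
    fix x
    show "ennreal (G x powr p) * indicator I x
      \<le> (\<Sum>k. ennreal (c powr p * (real k + 1) powr p) * indicator {x\<in>I. c * real k < G x} x)"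
      using powr_le_layer_sum[OF c G(2) p, of x] by (cases "x \<in> I") (auto simp: indicator_def)
  qed
  also have "\<dots> = (\<Sum>k. ennreal (c powr p * (real k + 1) powr p) * emeasure M {x\<in>I. c * real k < G x})"
    by (subst nn_integral_suminf) (auto simp: nn_integral_cmult_indicator)
  finally show ?thesis .
qed

lemma Youngs_inequality_normalized:
  fixes x y A B :: real
  assumes pq: "1 < p" "1 < q" "1/p + 1/q = 1" and xy: "0 \<le> x" "0 \<le> y" and AB: "0 < A" "0 < B"
  shows "x * y \<le> A powr (1/p) * B powr (1/q) * (x powr p / (p * A) + y powr q / (q * B))"
proof -
  define a where "a = A powr (1/p)"
  define b where "b = B powr (1/q)"
  have ab: "0 < a" "0 < b" unfolding a_def b_def using AB by auto
  have "(x / a) * (y / b) \<le> (x / a) powr p / p + (y / b) powr q / q"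
    using xy ab by (intro Youngs_inequality pq) auto
  also have "(x / a) powr p = x powr p / A" using xy ab AB pq by (simp add: a_def powr_divide powr_powr)
  also have "(y / b) powr q = y powr q / B" using xy ab AB pq by (simp add: b_def powr_divide powr_powr)
  finally have "a * b * ((x / a) * (y / b)) \<le> a * b * (x powr p / A / p + y powr q / B / q)"
    using ab by (intro mult_left_mono) auto
  thus ?thesis using ab unfolding a_def[symmetric] b_def[symmetric] by (simp add: field_simps)
qed

lemma Holder_nn_integral_zero:
  fixes F G :: "'a \<Rightarrow> real"
  assumes "F \<in> borel_measurable M" "\<And>x. 0 \<le> F x" "0 < p"
    and "(\<integral>\<^sup>+x. ennreal (F x powr p) \<partial>M) = 0"
  shows "(\<integral>\<^sup>+x. ennreal (F x * G x) \<partial>M) = 0"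
proof -
  have "AE x in M. ennreal (F x powr p) = 0"
    using assms by (subst nn_integral_0_iff_AE[symmetric]) auto
  hence "AE x in M. F x = 0" by (rule AE_mp) (auto intro!: AE_I2 simp: assms(2))
  hence "(\<integral>\<^sup>+x. ennreal (F x * G x) \<partial>M) = (\<integral>\<^sup>+x. 0 \<partial>M)"
    by (intro nn_integral_cong_AE) (auto elim!: AE_mp)
  thus ?thesis by simp
qed

lemma Holder_nn_integral:
  fixes F G :: "'a \<Rightarrow> real"
  assumes pq: "1 < p" "1 < q" "1/p + 1/q = 1"
    and m[measurable]: "F \<in> borel_measurable M" "G \<in> borel_measurable M"
    and nn: "\<And>x. 0 \<le> F x" "\<And>x. 0 \<le> G x"
    and fin: "(\<integral>\<^sup>+x. ennreal (F x powr p) \<partial>M) < \<infinity>" "(\<integral>\<^sup>+x. ennreal (G x powr q) \<partial>M) < \<infinity>"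
  shows "(\<integral>\<^sup>+x. ennreal (F x * G x) \<partial>M)
    \<le> ennreal (enn2real (\<integral>\<^sup>+x. ennreal (F x powr p) \<partial>M) powr (1/p) * enn2real (\<integral>\<^sup>+x. ennreal (G x powr q) \<partial>M) powr (1/q))"
proof -
  define A where "A = enn2real (\<integral>\<^sup>+x. ennreal (F x powr p) \<partial>M)"
  define B where "B = enn2real (\<integral>\<^sup>+x. ennreal (G x powr q) \<partial>M)"
  have IA: "(\<integral>\<^sup>+x. ennreal (F x powr p) \<partial>M) = ennreal A" unfolding A_def using fin(1) by (simp add: less_top)
  have IB: "(\<integral>\<^sup>+x. ennreal (G x powr q) \<partial>M) = ennreal B" unfolding B_def using fin(2) by (simp add: less_top)
  have A0: "0 \<le> A" "0 \<le> B" unfolding A_def B_def by auto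
  show ?thesis
  proof (cases "A = 0 \<or> B = 0")
    case True
    hence "(\<integral>\<^sup>+x. ennreal (F x * G x) \<partial>M) = 0"
    proof
      assume "A = 0" thus ?thesis using Holder_nn_integral_zero[OF m(1) nn(1), of p G] IA pq by simp
    next
      assume "B = 0"
      hence "(\<integral>\<^sup>+x. ennreal (G x * F x) \<partial>M) = 0" using Holder_nn_integral_zero[OF m(2) nn(2), of q F] IB pq by simp
      thus ?thesis by (simp add: mult.commute)
    qed
    thus ?thesis by simp
  next
    case False
    hence Ap: "0 < A" "0 < B" using A0 by auto
    define c1 where "c1 = A powr (1/p) * B powr (1/q) / (p * A)"
    define c2 where "c2 = A powr (1/p) * B powr (1/q) / (q * B)"
    have pw: "F x * G x \<le> c1 * F x powr p + c2 * G x powr q" for x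
      using Youngs_inequality_normalized[OF pq nn(1)[of x] nn(2)[of x] Ap] unfolding c1_def c2_def
      by (simp add: field_simps)
    have c0: "0 \<le> c1" "0 \<le> c2" unfolding c1_def c2_def using Ap pq by auto
    have "(\<integral>\<^sup>+x. ennreal (F x * G x) \<partial>M)
        \<le> (\<integral>\<^sup>+x. ennreal (c1) * ennreal (F x powr p) + ennreal (c2) * ennreal (G x powr q) \<partial>M)"
    proof (intro nn_integral_mono)
      fix x
      have "ennreal (F x * G x) \<le> ennreal (c1 * F x powr p + c2 * G x powr q)"
        using pw[of x] by (rule ennreal_leI)
      also have "\<dots> = ennreal c1 * ennreal (F x powr p) + ennreal c2 * ennreal (G x powr q)"
        using c0 by (simp add: ennreal_mult)
      finally show "ennreal (F x * G x) \<le> ennreal (c1) * ennreal (F x powr p) + ennreal (c2) * ennreal (G x powr q)" .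
    qed
    also have "\<dots> = ennreal (c1) * ennreal A + ennreal (c2) * ennreal B"
      by (subst nn_integral_add) (auto simp: nn_integral_cmult IA IB)
    also have "\<dots> = ennreal (c1 * A + c2 * B)"
      using c0 A0 by (simp add: ennreal_mult)
    also have "c1 * A + c2 * B = A powr (1/p) * B powr (1/q) * (1/p + 1/q)"
      unfolding c1_def c2_def using Ap pq by (simp add: field_simps)
    finally show ?thesis unfolding A_def B_def pq(3) by simp
  qed
qed

lemma emeasure_Int_large:
  assumes fin: "emeasure M D < \<infinity>" and sets: "D \<in> sets M" "E \<in> sets M" and c: "0 < c"
    and small: "emeasure M (D - E) < ennreal (1/3) * emeasure M D"
  shows "ennreal (2*c) * emeasure M D < ennreal (3*c) * emeasure M (D \<inter> E)"
proof -
  have split: "emeasure M D = emeasure M (D \<inter> E) + emeasure M (D - E)"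
    using sets by (subst plus_emeasure) (auto intro!: arg_cong[where f="emeasure M"])
  obtain x where x: "emeasure M (D \<inter> E) = ennreal x" "0 \<le> x"
    using fin split by (cases "emeasure M (D \<inter> E)") (auto simp: top_unique)
  obtain y where y: "emeasure M (D - E) = ennreal y" "0 \<le> y"
    using fin split by (cases "emeasure M (D - E)") (auto simp: top_unique)
  have "ennreal (1/3) * emeasure M D = ennreal ((x + y) / 3)"
    unfolding split x(1) y(1) using x(2) y(2)
    by (simp add: ennreal_mult'[symmetric] ennreal_plus[symmetric] del: ennreal_plus)
  hence "y < (x + y) / 3" using small y unfolding y(1) by (simp add: ennreal_less_iff)
  hence "c * (2 * y) < c * x" using c by (intro mult_strict_left_mono) auto
  hence lt: "2*c * (x + y) < 3*c * x" by (simp add: algebra_simps)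
  have "0 \<le> 2*c * (x + y)" using x(2) y(2) c by simp
  with lt have "ennreal (2*c * (x + y)) < ennreal (3*c * x)" by (intro ennreal_lessI) linarith+
  moreover have "ennreal (2*c) * emeasure M D = ennreal (2*c * (x + y))"
    unfolding split x(1) y(1) using x(2) y(2) c
    by (simp add: ennreal_mult'[symmetric] ennreal_plus[symmetric] del: ennreal_plus)
  moreover have "ennreal (3*c) * emeasure M (D \<inter> E) = ennreal (3*c * x)"
    unfolding x(1) using x(2) c by (simp add: ennreal_mult'[symmetric])
  ultimately show ?thesis by simp
qed

lemma epowr_le:
  assumes "Y \<le> ennreal B" "0 \<le> B" "0 < p"
  shows "epowr Y (1/p) \<le> ennreal (B powr (1/p))"
proof -
  have "Y \<noteq> \<infinity>" using assms(1) by (auto simp: top_unique)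
  hence e: "epowr Y (1/p) = ennreal (enn2real Y powr (1/p))" unfolding epowr_def by simp
  have "enn2real Y \<le> B" using enn2real_mono[OF assms(1)] assms(2) by simp
  hence "enn2real Y powr (1/p) \<le> B powr (1/p)" using assms(3) by (intro powr_mono2) auto
  thus ?thesis unfolding e by (rule ennreal_leI)
qed

lemma epowr_div_real:
  assumes "X < \<infinity>" "0 < W" "W < \<infinity>"
  shows "epowr (X / W) (1/p) = ennreal ((enn2real X / enn2real W) powr (1/p))"
proof -
  have "X / W = ennreal (enn2real X / enn2real W)"
    using assms by (cases X; cases W) (auto simp: divide_ennreal)
  thus ?thesis unfolding epowr_def by simp
qed

lemma ennreal_divide_le_const:
  fixes X W :: ennreal
  assumes "X \<le> ennreal K * W" "W < \<infinity>" "0 \<le> K"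
  shows "X / W \<le> ennreal K"
proof (cases "W = 0")
  case True
  hence "X = 0" using assms(1) by simp
  thus ?thesis by simp
next
  case False
  thus ?thesis using assms by (intro divide_le_posI_ennreal) (auto simp: mult.commute zero_less_iff_neq_zero)
qed

lemma ennreal_le_times_of_divide_le:
  fixes X m Y :: ennreal
  assumes "X / m \<le> Y" "m \<noteq> 0" "m < \<infinity>"
  shows "X \<le> Y * m"
proof -
  have "X = X / m * m" using assms(2,3) by (simp add: ennreal_divide_times)
  also have "\<dots> \<le> Y * m" using assms(1) by (rule mult_right_mono) simp
  finally show ?thesis .
qed

lemma ennreal_le_of_upper_bounds:
  fixes X Y :: ennreal
  assumes X: "X < \<infinity>" and C: "0 < C"
    and bound: "\<And>N. 0 < N \<Longrightarrow> X \<le> ennreal N \<Longrightarrow> Y \<le> ennreal (C * N)"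
  shows "Y \<le> ennreal C * X"
proof (rule ennreal_le_epsilon)
  fix e :: real assume e: "0 < e"
  obtain x where x: "X = ennreal x" "0 \<le> x" using X by (cases X) auto
  have "Y \<le> ennreal (C * (x + e / C))"
    using x e C by (intro bound) (auto intro: add_nonneg_pos)
  also have "C * (x + e / C) = C * x + e" using C by (simp add: field_simps)
  finally show "Y \<le> ennreal C * X + ennreal e"
    using x e C by (simp add: ennreal_mult)
qed

lemma fraction_bound_imp_halving:
  fixes mE mF WE WF C r :: real
  assumes r: "1 \<le> r" and C: "0 \<le> C" and W: "0 \<le> WE" "0 \<le> WF"
    and m: "0 < mE + mF" "2 * mE \<le> mE + mF"
    and bound: "mF powr r * (WE + WF) \<le> C * WF * (mE + mF) powr r"
  shows "WE \<le> (1 - min ((1/2) powr r / (C + 1)) (1/2)) * (WE + WF)"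
proof -
  let ?\<gamma> = "(1/2) powr r / (C + 1)"
  have "((mE + mF) / 2) powr r \<le> mF powr r" using m r by (intro powr_mono2) auto
  hence "(1/2) powr r * (mE + mF) powr r * (WE + WF) \<le> mF powr r * (WE + WF)"
    using W m by (intro mult_right_mono) (auto simp: powr_divide)
  also note bound
  also have "C * WF * (mE + mF) powr r \<le> (C + 1) * WF * (mE + mF) powr r"
    using W by (intro mult_right_mono) auto
  finally have "((1/2) powr r * (WE + WF)) * (mE + mF) powr r \<le> ((C + 1) * WF) * (mE + mF) powr r"
    by (simp add: mult_ac)
  hence "(1/2) powr r * (WE + WF) \<le> (C + 1) * WF" using m by (subst (asm) mult_le_cancel_right_pos) auto
  hence "?\<gamma> * (WE + WF) \<le> WF" using C by (simp add: field_simps)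
  moreover have "min ?\<gamma> (1/2) * (WE + WF) \<le> ?\<gamma> * (WE + WF)" using W by (intro mult_right_mono) auto
  ultimately show ?thesis by (simp add: algebra_simps)
qed

lemma Ap_powr_bound:
  fixes X S W m C p :: real
  assumes p: "1 < p" and nn: "0 \<le> X" "0 \<le> S" and C: "0 \<le> C" and W: "0 < W" and m: "0 < m"
    and Ap: "W * S powr (p - 1) \<le> C * m powr p"
  shows "X powr (1/p) * S powr (1 - 1/p) \<le> C powr (1/p) * m * (X / W) powr (1/p)"
proof -
  have "S powr (1 - 1/p) = (S powr (p - 1)) powr (1/p)"
    using p by (simp add: powr_powr field_simps)
  also have "S powr (p - 1) \<le> C * m powr p / W" using Ap W by (simp add: field_simps)
  hence "(S powr (p - 1)) powr (1/p) \<le> (C * m powr p / W) powr (1/p)" using p by (intro powr_mono2) auto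
  also have "(C * m powr p / W) powr (1/p) = C powr (1/p) * m / W powr (1/p)"
    using p m C W by (simp add: powr_mult powr_divide powr_powr)
  finally have "X powr (1/p) * S powr (1 - 1/p) \<le> X powr (1/p) * (C powr (1/p) * m / W powr (1/p))"
    by (intro mult_left_mono) auto
  also have "\<dots> = C powr (1/p) * m * (X / W) powr (1/p)"
    using W nn by (simp add: powr_divide field_simps)
  finally show ?thesis .
qed

section \<open>Dyadic subintervals\<close>

definition dyadic_Ioo :: "real \<Rightarrow> real \<Rightarrow> nat \<Rightarrow> nat \<Rightarrow> real set" where
  "dyadic_Ioo a b k j = {a + real j * (b-a) / 2^k <..< a + (real j + 1) * (b-a) / 2^k}"

definition dyadic_left :: "real \<Rightarrow> real \<Rightarrow> nat \<Rightarrow> nat \<Rightarrow> real" where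
  "dyadic_left a b k j = a + real j * (b-a) / 2^k"

lemma dyadic_Ioo_eq: "dyadic_Ioo a b k j = {dyadic_left a b k j <..< dyadic_left a b k (Suc j)}"
  unfolding dyadic_Ioo_def dyadic_left_def by (simp add: add.commute)

lemma dyadic_left_ge: "a \<le> b \<Longrightarrow> a \<le> dyadic_left a b k j"
  unfolding dyadic_left_def by simp

lemma dyadic_left_Suc_diff: "dyadic_left a b k (Suc j) - dyadic_left a b k j = (b-a)/2^k"
  unfolding dyadic_left_def by (simp add: field_simps)

lemma dyadic_left_less: "a < b \<Longrightarrow> dyadic_left a b k j < dyadic_left a b k (Suc j)"
  using dyadic_left_Suc_diff[of a b k j] by (smt (verit) divide_pos_pos zero_less_power)

lemma dyadic_Ioo_subset:
  assumes "a < b" "j < 2^k"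
  shows "dyadic_Ioo a b k j \<subseteq> {a<..<b}"
proof -
  have "real j + 1 \<le> 2^k" using assms(2)
    by (metis Suc_leI of_nat_Suc of_nat_le_iff of_nat_numeral of_nat_power add.commute)
  hence "(real j + 1) * (b-a) / 2^k \<le> 2^k * (b-a) / 2^k"
    using assms(1) by (intro divide_right_mono mult_right_mono) auto
  hence 1: "(real j + 1) * (b-a) / 2^k \<le> b - a" by simp
  have 2: "0 \<le> real j * (b-a) / 2^k" using assms by auto
  show ?thesis unfolding dyadic_Ioo_def using 1 2 by auto
qed

lemma dyadic_Ioo_0: "dyadic_Ioo a b 0 0 = {a<..<b}"
  unfolding dyadic_Ioo_def by simp

lemma dyadic_Ioo_subset_ancestor:
  assumes "a < b" "k' \<le> k"
  shows "dyadic_Ioo a b k j \<subseteq> dyadic_Ioo a b k' (j div 2^(k-k'))"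
proof -
  define m where "m = k - k'"
  define q where "q = j div 2^m"
  have k: "k = k' + m" using assms m_def by simp
  have q1: "q * 2^m \<le> j" unfolding q_def by (rule div_times_less_eq_dividend)
  have q2: "j + 1 \<le> (q+1) * 2^m"
  proof -
    have "j mod 2^m < 2^m" by simp
    moreover have "j = q*2^m + j mod 2^m" unfolding q_def by (metis div_mult_mod_eq)
    ultimately have "j + 1 \<le> q*2^m + 2^m" by linarith
    thus ?thesis by (simp add: algebra_simps)
  qed
  have pk: "(2::real)^k = 2^k' * 2^m" by (simp add: k power_add)
  have e1: "a + real q * (b-a) / 2^k' = a + real (q*2^m) * (b-a) / 2^k"
    by (simp add: pk field_simps)
  have e2: "a + (real q + 1) * (b-a) / 2^k' = a + real ((q+1)*2^m) * (b-a) / 2^k"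
    by (simp add: pk field_simps)
  have l1: "a + real (q*2^m) * (b-a) / 2^k \<le> a + real j * (b-a) / 2^k"
    using of_nat_mono[OF q1, where 'a=real] assms(1) by (intro add_left_mono divide_right_mono mult_right_mono) auto
  have l2: "a + (real j + 1) * (b-a) / 2^k \<le> a + real ((q+1)*2^m) * (b-a) / 2^k"
  proof -
    have "real j + 1 \<le> real ((q+1)*2^m)" using q2 by (metis of_nat_Suc of_nat_le_iff Suc_eq_plus1 add.commute)
    thus ?thesis using assms(1) by (intro add_left_mono divide_right_mono mult_right_mono) auto
  qed
  show ?thesis unfolding dyadic_Ioo_def m_def[symmetric] q_def[symmetric] using l1 l2 e1 e2 by auto
qed

lemma dyadic_Ioo_disjoint:
  assumes "a < b" "j \<noteq> j'"
  shows "dyadic_Ioo a b k j \<inter> dyadic_Ioo a b k j' = {}"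
proof -
  have *: "dyadic_Ioo a b k j \<inter> dyadic_Ioo a b k j' = {}" if "j < j'" for j j'
  proof -
    have "real j + 1 \<le> real j'" using that by simp
    hence "(real j + 1) * (b-a) / 2^k \<le> real j' * (b-a) / 2^k"
      using assms(1) by (intro divide_right_mono mult_right_mono) auto
    thus ?thesis unfolding dyadic_Ioo_def by auto
  qed
  show ?thesis using assms *[of j j'] *[of j' j] by (cases "j < j'") auto
qed

lemma dyadic_Ioo_ancestor_unique:
  assumes "a < b" "k' \<le> k" "dyadic_Ioo a b k j \<inter> dyadic_Ioo a b k' j' \<noteq> {}"
  shows "j' = j div 2^(k-k')"
  using dyadic_Ioo_subset_ancestor[OF assms(1,2), of j] dyadic_Ioo_disjoint[OF assms(1), of j' "j div 2^(k-k')" k'] assms(3)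
  by blast

lemma dyadic_Ioo_dist:
  assumes "a < b" "x \<in> dyadic_Ioo a b k j" "y \<in> dyadic_Ioo a b k j"
  shows "dist y x < (b-a) / 2^k"
proof -
  have "(real j + 1) * (b-a) / 2^k - real j * (b-a) / 2^k = (b-a)/2^k"
    by (simp add: field_simps)
  thus ?thesis using assms unfolding dyadic_Ioo_def dist_real_def by auto
qed

text \<open>Off this null set each point of \<open>(a, b)\<close> lies in a dyadic subinterval of every generation.\<close>

definition dyadic_grid :: "real \<Rightarrow> real \<Rightarrow> real set" where
  "dyadic_grid a b = (\<Union>k::nat. range (\<lambda>m::int. a + real_of_int m * (b-a) / 2^k))"

lemma countable_dyadic_grid: "countable (dyadic_grid a b)"
  unfolding dyadic_grid_def by auto

lemma dyadic_grid_null: "dyadic_grid a b \<in> null_sets lborel"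
  using countable_dyadic_grid by (rule countable_imp_null_set_lborel)

definition dyadic_index :: "real \<Rightarrow> real \<Rightarrow> nat \<Rightarrow> real \<Rightarrow> nat" where
  "dyadic_index a b k x = nat \<lfloor>(x-a) * 2^k / (b-a)\<rfloor>"

lemma dyadic_index_mem:
  assumes "a < b" "x \<in> {a<..<b}" "x \<notin> dyadic_grid a b"
  shows "x \<in> dyadic_Ioo a b k (dyadic_index a b k x)" "dyadic_index a b k x < 2^k"
proof -
  define y where "y = (x-a) * 2^k / (b-a)"
  have ba: "0 < b - a" using assms(1) by simp
  have y0: "0 < y" unfolding y_def using assms(2) ba by (intro divide_pos_pos mult_pos_pos) auto
  have "(x-a) * 2^k < (b-a) * 2^k" using assms(2) by (intro mult_strict_right_mono) auto
  hence yb: "y < 2^k" unfolding y_def using ba by (simp add: divide_less_eq)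
  have xy: "x = a + y * (b-a) / 2^k" unfolding y_def using ba by simp
  have nint: "y \<noteq> real_of_int \<lfloor>y\<rfloor>"
  proof
    assume h: "y = real_of_int \<lfloor>y\<rfloor>"
    have "x = (\<lambda>m::int. a + real_of_int m * (b-a) / 2^k) \<lfloor>y\<rfloor>" using xy h by simp
    hence "x \<in> range (\<lambda>m::int. a + real_of_int m * (b-a) / 2^k)" by (rule range_eqI)
    hence "x \<in> dyadic_grid a b" unfolding dyadic_grid_def by (rule UN_I[OF UNIV_I])
    with assms(3) show False by simp
  qed
  have f0: "0 \<le> \<lfloor>y\<rfloor>" using y0 by simp
  have ri: "real (dyadic_index a b k x) = real_of_int \<lfloor>y\<rfloor>" unfolding dyadic_index_def y_def[symmetric] using f0 by simp
  have l: "real_of_int \<lfloor>y\<rfloor> < y" using nint of_int_floor_le[of y] by linarith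
  have u: "y < real_of_int \<lfloor>y\<rfloor> + 1" by linarith
  have l': "real (dyadic_index a b k x) * (b-a) / 2^k < y * (b-a) / 2^k"
    using l ri ba by (intro divide_strict_right_mono mult_strict_right_mono) auto
  have u': "y * (b-a) / 2^k < (real (dyadic_index a b k x) + 1) * (b-a) / 2^k"
    using u ri ba by (intro divide_strict_right_mono mult_strict_right_mono) auto
  show "x \<in> dyadic_Ioo a b k (dyadic_index a b k x)" unfolding dyadic_Ioo_def using l' u' xy by simp
  have "\<lfloor>y\<rfloor> < 2^k" using yb by (simp add: floor_less_iff)
  thus "dyadic_index a b k x < 2^k" unfolding dyadic_index_def y_def[symmetric] using f0 by (simp add: nat_less_iff)
qed

text \<open>\<open>(k', j div 2^(k - k'))\<close> indexes the ancestor of \<open>dyadic_Ioo a b k j\<close> in generation \<open>k'\<close>.\<close>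

definition maximal_dyadic :: "(nat \<Rightarrow> nat \<Rightarrow> bool) \<Rightarrow> (nat \<times> nat) set" where
  "maximal_dyadic P = {(k,j). j < 2^k \<and> P k j \<and> (\<forall>k'<k. \<not> P k' (j div 2^(k-k')))}"

lemma countable_maximal_dyadic: "countable (maximal_dyadic P)"
  by (rule countable_subset[of _ UNIV]) auto

lemma maximal_dyadic_disjoint:
  assumes "a < b" "(k,j) \<in> maximal_dyadic P" "(k',j') \<in> maximal_dyadic P" "(k,j) \<noteq> (k',j')"
  shows "dyadic_Ioo a b k j \<inter> dyadic_Ioo a b k' j' = {}"
proof -
  have *: "dyadic_Ioo a b k j \<inter> dyadic_Ioo a b k' j' = {}"
    if h: "(k,j) \<in> maximal_dyadic P" "(k',j') \<in> maximal_dyadic P" "(k,j) \<noteq> (k',j')" "k' \<le> k" for k j k' j'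
  proof (rule ccontr)
    assume ne: "dyadic_Ioo a b k j \<inter> dyadic_Ioo a b k' j' \<noteq> {}"
    have e: "j' = j div 2^(k-k')" using dyadic_Ioo_ancestor_unique[OF assms(1) h(4) ne] .
    show False
    proof (cases "k' = k")
      case True thus ?thesis using e h(3) by simp
    next
      case False
      hence "k' < k" using h(4) by simp
      thus ?thesis using h(1,2) e unfolding maximal_dyadic_def by auto
    qed
  qed
  show ?thesis using assms *[of k j k' j'] *[of k' j' k j] by (cases "k' \<le> k") auto
qed

lemma maximal_dyadic_cover:
  assumes "a < b" "j < 2^k" "P k j"
  shows "\<exists>k' j'. (k',j') \<in> maximal_dyadic P \<and> dyadic_Ioo a b k j \<subseteq> dyadic_Ioo a b k' j'"
proof -
  define k' where "k' = (LEAST k'. P k' (j div 2^(k-k')))"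
  have Pk: "P k (j div 2^(k-k))" using assms by simp
  have P': "P k' (j div 2^(k-k'))" unfolding k'_def by (rule LeastI[of _ k], fact Pk)
  have le: "k' \<le> k" unfolding k'_def by (rule Least_le, fact Pk)
  have notP: "\<not> P k'' (j div 2^(k-k''))" if "k'' < k'" for k''
    using not_less_Least[of k'' "\<lambda>k'. P k' (j div 2^(k-k'))"] that unfolding k'_def by blast
  have dd: "(j div 2^(k-k')) div 2^(k'-k'') = j div 2^(k-k'')" if "k'' < k'" for k''
  proof -
    have "(k-k') + (k'-k'') = k - k''" using le that by simp
    thus ?thesis by (metis div_mult2_eq power_add)
  qed
  have lt: "j div 2^(k-k') < 2^k'"
  proof -
    have "j < 2^k' * 2^(k-k')" using assms(2) le by (metis le_add_diff_inverse power_add)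
    thus ?thesis by (simp add: div_less_iff_less_mult)
  qed
  have "(k', j div 2^(k-k')) \<in> maximal_dyadic P"
    unfolding maximal_dyadic_def using P' lt notP dd by auto
  moreover have "dyadic_Ioo a b k j \<subseteq> dyadic_Ioo a b k' (j div 2^(k-k'))" using dyadic_Ioo_subset_ancestor[OF assms(1) le] .
  ultimately show ?thesis by blast
qed

lemma maximal_dyadic_index_less: "i \<in> maximal_dyadic P \<Longrightarrow> snd i < 2 ^ fst i"
  unfolding maximal_dyadic_def by auto

lemma maximal_dyadic_holds: "i \<in> maximal_dyadic P \<Longrightarrow> P (fst i) (snd i)"
  unfolding maximal_dyadic_def by auto

lemma disjoint_family_maximal_dyadic:
  assumes "a < b"
  shows "disjoint_family_on (\<lambda>i. dyadic_Ioo a b (fst i) (snd i)) (maximal_dyadic P)"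
proof (unfold disjoint_family_on_def, intro ballI impI)
  fix i i' assume "i \<in> maximal_dyadic P" "i' \<in> maximal_dyadic P" "i \<noteq> i'"
  thus "dyadic_Ioo a b (fst i) (snd i) \<inter> dyadic_Ioo a b (fst i') (snd i') = {}"
    using maximal_dyadic_disjoint[OF assms] by (cases i; cases i') auto
qed

lemma dyadic_Ioo_borel[measurable]: "dyadic_Ioo a b k j \<in> sets borel"
  unfolding dyadic_Ioo_def by simp

lemma UN_maximal_dyadic_borel[measurable]:
  "(\<Union>i\<in>maximal_dyadic P. dyadic_Ioo a b (fst i) (snd i)) \<in> sets borel"
  by (intro sets.countable_UN'' countable_maximal_dyadic) simp

lemma UN_maximal_dyadic_subset:
  assumes "a < b"
  shows "(\<Union>i\<in>maximal_dyadic P. dyadic_Ioo a b (fst i) (snd i)) \<subseteq> {a<..<b}"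
proof (intro UN_least)
  fix i assume "i \<in> maximal_dyadic P"
  thus "dyadic_Ioo a b (fst i) (snd i) \<subseteq> {a<..<b}"
    by (intro dyadic_Ioo_subset[OF assms] maximal_dyadic_index_less)
qed

lemma emeasure_UN_maximal_dyadic:
  assumes "a < b" "sets M = sets borel"
  shows "emeasure M (\<Union>i\<in>maximal_dyadic P. dyadic_Ioo a b (fst i) (snd i))
    = (\<integral>\<^sup>+i. emeasure M (dyadic_Ioo a b (fst i) (snd i)) \<partial>count_space (maximal_dyadic P))"
  using assms(2)
  by (intro emeasure_UN_countable countable_maximal_dyadic disjoint_family_maximal_dyadic[OF assms(1)]) auto

lemma open_subset_UN_maximal_dyadic:
  assumes "a < b" "open V"
  shows "V \<inter> {a<..<b} - dyadic_grid a b
    \<subseteq> (\<Union>i\<in>maximal_dyadic (\<lambda>k j. dyadic_Ioo a b k j \<subseteq> V). dyadic_Ioo a b (fst i) (snd i))"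
proof
  fix x assume x: "x \<in> V \<inter> {a<..<b} - dyadic_grid a b"
  obtain r where r: "0 < r" "ball x r \<subseteq> V" using assms(2) x open_contains_ball by blast
  obtain k where "(b-a)/r < 2^k" using real_arch_pow[of 2 "(b-a)/r"] by auto
  hence kr: "(b-a)/2^k < r" using r(1) by (simp add: field_simps)
  define j where "j = dyadic_index a b k x"
  have xin: "x \<in> dyadic_Ioo a b k j" and jlt: "j < 2^k"
    using dyadic_index_mem[OF assms(1)] x unfolding j_def by auto
  have "dyadic_Ioo a b k j \<subseteq> ball x r"
  proof
    fix y assume "y \<in> dyadic_Ioo a b k j"
    hence "dist y x < (b-a)/2^k" using dyadic_Ioo_dist[OF assms(1) xin] by auto
    thus "y \<in> ball x r" using kr by (simp add: dist_commute)
  qed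
  with r(2) have "dyadic_Ioo a b k j \<subseteq> V" by blast
  then obtain k' j' where kj': "(k',j') \<in> maximal_dyadic (\<lambda>k j. dyadic_Ioo a b k j \<subseteq> V)"
      "dyadic_Ioo a b k j \<subseteq> dyadic_Ioo a b k' j'"
    using maximal_dyadic_cover[where P="\<lambda>k j. dyadic_Ioo a b k j \<subseteq> V", OF assms(1) jlt] by blast
  hence "x \<in> dyadic_Ioo a b (fst (k',j')) (snd (k',j'))" using xin by auto
  thus "x \<in> (\<Union>i\<in>maximal_dyadic (\<lambda>k j. dyadic_Ioo a b k j \<subseteq> V). dyadic_Ioo a b (fst i) (snd i))"
    using kj'(1) by (rule UN_I[rotated])
qed

section \<open>The measure \<open>\<mu>\<close>\<close>

definition mu_measure :: "real \<Rightarrow> real measure" where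
  "mu_measure lam = density lborel (\<lambda>t. ennreal (t powr (2*lam)))"

lemma sets_mu_measure[simp, measurable_cong]: "sets (mu_measure lam) = sets borel"
  unfolding mu_measure_def by simp

lemma space_mu_measure[simp]: "space (mu_measure lam) = UNIV"
  unfolding mu_measure_def by simp

lemma emeasure_mu_measure:
  assumes "A \<in> sets borel"
  shows "emeasure (mu_measure lam) A = (\<integral>\<^sup>+ t\<in>A. ennreal (t powr (2*lam)) \<partial>lborel)"
  unfolding mu_measure_def using assms by (subst emeasure_density) auto

lemma mu_meas_eq_emeasure: "mu_meas lam a b = emeasure (mu_measure lam) {a<..<b}"
  unfolding mu_meas_def by (simp add: emeasure_mu_measure)

lemma nn_integral_mu_measure:
  assumes "g \<in> borel_measurable borel"
  shows "(\<integral>\<^sup>+ t. g t \<partial>mu_measure lam) = (\<integral>\<^sup>+ t. ennreal (t powr (2*lam)) * g t \<partial>lborel)"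
  unfolding mu_measure_def using assms by (subst nn_integral_density) auto

lemma emeasure_mu_le_lborel:
  assumes "A \<in> sets borel" "A \<subseteq> {0..b}" "0 \<le> lam"
  shows "emeasure (mu_measure lam) A \<le> ennreal (b powr (2*lam)) * emeasure lborel A"
proof -
  have "emeasure (mu_measure lam) A = (\<integral>\<^sup>+ t. ennreal (t powr (2*lam)) * indicator A t \<partial>lborel)"
    using emeasure_mu_measure[OF assms(1)] by simp
  also have "\<dots> \<le> (\<integral>\<^sup>+ t. ennreal (b powr (2*lam)) * indicator A t \<partial>lborel)"
  proof (intro nn_integral_mono)
    fix t show "ennreal (t powr (2*lam)) * indicator A t \<le> ennreal (b powr (2*lam)) * indicator A t"
    proof (cases "t \<in> A")
      case True
      hence "0 \<le> t" "t \<le> b" using assms(2) by auto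
      hence "t powr (2*lam) \<le> b powr (2*lam)" using assms(3) by (intro powr_mono2) auto
      thus ?thesis using True by (simp add: ennreal_leI)
    qed simp
  qed
  also have "\<dots> = ennreal (b powr (2*lam)) * emeasure lborel A"
    using assms(1) by (subst nn_integral_cmult_indicator) auto
  finally show ?thesis .
qed

lemma lborel_le_emeasure_mu:
  assumes "A \<in> sets borel" "A \<subseteq> {u..}" "0 \<le> u" "0 \<le> lam"
  shows "ennreal (u powr (2*lam)) * emeasure lborel A \<le> emeasure (mu_measure lam) A"
proof -
  have "ennreal (u powr (2*lam)) * emeasure lborel A = (\<integral>\<^sup>+ t. ennreal (u powr (2*lam)) * indicator A t \<partial>lborel)"
    using assms(1) by (subst nn_integral_cmult_indicator) auto
  also have "\<dots> \<le> (\<integral>\<^sup>+ t. ennreal (t powr (2*lam)) * indicator A t \<partial>lborel)"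
  proof (intro nn_integral_mono)
    fix t show "ennreal (u powr (2*lam)) * indicator A t \<le> ennreal (t powr (2*lam)) * indicator A t"
    proof (cases "t \<in> A")
      case True
      hence "u \<le> t" using assms(2) by auto
      hence "u powr (2*lam) \<le> t powr (2*lam)" using assms(3,4) by (intro powr_mono2) auto
      thus ?thesis using True by (simp add: ennreal_leI)
    qed simp
  qed
  also have "\<dots> = emeasure (mu_measure lam) A"
    using emeasure_mu_measure[OF assms(1)] by simp
  finally show ?thesis .
qed

lemma mu_meas_le:
  assumes "0 \<le> a" "a < b" "0 \<le> lam"
  shows "mu_meas lam a b \<le> ennreal ((b-a) * b powr (2*lam))"
proof -
  have "mu_meas lam a b \<le> ennreal (b powr (2*lam)) * emeasure lborel {a<..<b}"
    unfolding mu_meas_eq_emeasure using assms by (intro emeasure_mu_le_lborel) auto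
  also have "\<dots> = ennreal ((b-a) * b powr (2*lam))"
    using assms by (simp add: ennreal_mult' mult.commute)
  finally show ?thesis .
qed

lemma mu_meas_ge:
  assumes "0 \<le> u" "u < v" "0 \<le> lam"
  shows "ennreal ((v-u) * u powr (2*lam)) \<le> mu_meas lam u v"
proof -
  have "ennreal ((v-u) * u powr (2*lam)) = ennreal (u powr (2*lam)) * emeasure lborel {u<..<v}"
    using assms by (simp add: ennreal_mult' mult.commute)
  also have "\<dots> \<le> mu_meas lam u v"
    unfolding mu_meas_eq_emeasure using assms by (intro lborel_le_emeasure_mu) auto
  finally show ?thesis .
qed

lemma mu_meas_mono:
  assumes "a \<le> u" "v \<le> b"
  shows "mu_meas lam u v \<le> mu_meas lam a b"
  unfolding mu_meas_eq_emeasure using assms by (intro emeasure_mono) auto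

lemma mu_meas_finite:
  assumes "0 \<le> a" "a < b" "0 \<le> lam"
  shows "mu_meas lam a b < \<infinity>"
  using mu_meas_le[OF assms] by (simp add: le_less_trans)

lemma mu_meas_pos:
  assumes "0 \<le> a" "a < b" "0 \<le> lam"
  shows "0 < mu_meas lam a b"
proof -
  define u where "u = (a+b)/2"
  have u: "0 < u" "a < u" "u < b" using assms unfolding u_def by auto
  have "0 < (b-u) * u powr (2*lam)" using u by simp
  hence "0 < ennreal ((b-u) * u powr (2*lam))" by simp
  also have "\<dots> \<le> mu_meas lam u b" using u assms(3) by (intro mu_meas_ge) auto
  also have "\<dots> \<le> mu_meas lam a b" using u by (intro mu_meas_mono) auto
  finally show ?thesis .
qed

lemma mu_meas_real_pos:
  assumes "0 \<le> a" "a < b" "0 \<le> lam"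
  shows "0 < enn2real (mu_meas lam a b)"
  using mu_meas_finite[OF assms] mu_meas_pos[OF assms]
  by (simp add: enn2real_positive_iff)

lemma mu_meas_real:
  assumes "0 \<le> a" "a < b" "0 \<le> lam"
  shows "mu_meas lam a b = ennreal (enn2real (mu_meas lam a b))" "0 < enn2real (mu_meas lam a b)"
  using mu_meas_finite[OF assms] mu_meas_real_pos[OF assms] by (auto simp: less_top)

definition doubling_const :: "real \<Rightarrow> real" where "doubling_const lam = 4 * 4 powr (2*lam)"

lemma doubling_const_ge_1: "0 \<le> lam \<Longrightarrow> 1 \<le> doubling_const lam"
proof -
  assume "0 \<le> lam"
  hence "1 \<le> 4 powr (2*lam)" by (intro ge_one_powr_ge_zero) auto
  thus "1 \<le> doubling_const lam" unfolding doubling_const_def by simp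
qed

lemma mu_meas_doubling:
  assumes "0 \<le> a" "a \<le> u" "u < v" "v \<le> b" "b - a \<le> 2 * (v - u)" "0 \<le> lam"
  shows "mu_meas lam a b \<le> ennreal (doubling_const lam) * mu_meas lam u v"
proof -
  define m where "m = (u+v)/2"
  have m: "u < m" "m < v" "b/4 \<le> m" using assms unfolding m_def by auto
  have b0: "0 \<le> b" using assms by auto
  have A: "mu_meas lam a b \<le> ennreal ((b-a) * b powr (2*lam))"
    using assms by (intro mu_meas_le) auto
  have e: "(b-a) * b powr (2*lam) = doubling_const lam * (((b-a)/4) * (b/4) powr (2*lam))"
    unfolding doubling_const_def using b0 by (simp add: powr_divide field_simps)
  have B0: "((b-a)/4) * (b/4) powr (2*lam) \<le> (v - m) * m powr (2*lam)"
  proof (intro mult_mono)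
    show "(b-a)/4 \<le> v - m" using assms unfolding m_def by (simp add: field_simps)
    show "(b/4) powr (2*lam) \<le> m powr (2*lam)" using m b0 assms by (intro powr_mono2) auto
  qed (use m in auto)
  have D0: "0 \<le> doubling_const lam" using doubling_const_ge_1[OF assms(6)] by simp
  have B: "(b-a) * b powr (2*lam) \<le> doubling_const lam * ((v - m) * m powr (2*lam))"
    unfolding e using B0 D0 by (rule mult_left_mono)
  have E: "ennreal (doubling_const lam * ((v - m) * m powr (2*lam))) = ennreal (doubling_const lam) * ennreal ((v - m) * m powr (2*lam))"
    using m D0 by (intro ennreal_mult) auto
  have C: "ennreal ((v - m) * m powr (2*lam)) \<le> mu_meas lam u v"
  proof -
    have "ennreal ((v - m) * m powr (2*lam)) \<le> mu_meas lam m v"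
      using m assms by (intro mu_meas_ge) auto
    also have "mu_meas lam m v \<le> mu_meas lam u v" using m by (intro mu_meas_mono) auto
    finally show ?thesis .
  qed
  have "mu_meas lam a b \<le> ennreal (doubling_const lam * ((v - m) * m powr (2*lam)))"
    using A B by (meson ennreal_leI order_trans)
  also have "\<dots> \<le> ennreal (doubling_const lam) * mu_meas lam u v"
    unfolding E using C by (rule mult_left_mono) simp
  finally show ?thesis .
qed

lemma null_sets_mu_measure: "A \<in> null_sets lborel \<Longrightarrow> A \<in> null_sets (mu_measure lam)"
  unfolding mu_measure_def
  by (subst null_sets_density_iff) (auto dest: AE_not_in elim!: AE_mp)

lemma null_sets_lborel_of_mu:
  assumes "A \<in> sets borel" "A \<subseteq> {0<..}" "emeasure (mu_measure lam) A = 0"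
  shows "A \<in> null_sets lborel"
proof -
  have "A \<in> null_sets (mu_measure lam)" using assms by (auto intro: null_setsI)
  hence "AE x in lborel. x \<in> A \<longrightarrow> ennreal (x powr (2*lam)) = 0"
    unfolding mu_measure_def by (subst (asm) null_sets_density_iff) auto
  hence "AE x in lborel. x \<notin> A"
  proof (rule AE_mp, intro AE_I2 impI)
    fix x assume h: "x \<in> A \<longrightarrow> ennreal (x powr (2*lam)) = 0"
    show "x \<notin> A"
    proof
      assume "x \<in> A"
      hence "0 < x" using assms(2) by auto
      hence "0 < x powr (2*lam)" by simp
      with h \<open>x \<in> A\<close> show False by simp
    qed
  qed
  thus ?thesis using assms(1) by (subst AE_iff_null_sets) auto
qed

lemma emeasure_mu_finite:
  assumes "A \<subseteq> {a<..<b}" "0 \<le> a" "a < b" "0 \<le> lam"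
  shows "emeasure (mu_measure lam) A < \<infinity>"
proof -
  have "emeasure (mu_measure lam) A \<le> emeasure (mu_measure lam) {a<..<b}"
    using assms(1) by (intro emeasure_mono) auto
  also have "\<dots> < \<infinity>" using mu_meas_finite[OF assms(2-4)] by (simp add: mu_meas_eq_emeasure)
  finally show ?thesis .
qed

lemma emeasure_mu_dyadic_Ioo: "emeasure (mu_measure lam) (dyadic_Ioo a b k j) = mu_meas lam (dyadic_left a b k j) (dyadic_left a b k (Suc j))"
  by (simp add: dyadic_Ioo_eq mu_meas_eq_emeasure)

lemma emeasure_dyadic_Ioo:
  assumes "0 \<le> a" "a < b" "0 \<le> lam"
  shows "0 < emeasure (mu_measure lam) (dyadic_Ioo a b k j)" "emeasure (mu_measure lam) (dyadic_Ioo a b k j) < \<infinity>"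
proof -
  have h: "0 \<le> dyadic_left a b k j" "dyadic_left a b k j < dyadic_left a b k (Suc j)"
    using dyadic_left_ge[of a b k j] dyadic_left_less[OF assms(2), of k j] assms by auto
  show "0 < emeasure (mu_measure lam) (dyadic_Ioo a b k j)" unfolding emeasure_mu_dyadic_Ioo by (rule mu_meas_pos[OF h assms(3)])
  show "emeasure (mu_measure lam) (dyadic_Ioo a b k j) < \<infinity>" unfolding emeasure_mu_dyadic_Ioo by (rule mu_meas_finite[OF h assms(3)])
qed

lemma emeasure_dyadic_parent_le:
  assumes "0 \<le> a" "a < b" "0 \<le> lam"
  shows "emeasure (mu_measure lam) (dyadic_Ioo a b k (j div 2)) \<le> ennreal (doubling_const lam) * emeasure (mu_measure lam) (dyadic_Ioo a b (Suc k) j)"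
proof -
  have sub: "dyadic_Ioo a b (Suc k) j \<subseteq> dyadic_Ioo a b k (j div 2)"
    using dyadic_Ioo_subset_ancestor[OF assms(2), of k "Suc k" j] by simp
  have lt: "dyadic_left a b (Suc k) j < dyadic_left a b (Suc k) (Suc j)" using dyadic_left_less[OF assms(2)] .
  have ends: "dyadic_left a b k (j div 2) \<le> dyadic_left a b (Suc k) j" "dyadic_left a b (Suc k) (Suc j) \<le> dyadic_left a b k (Suc (j div 2))"
    using sub lt unfolding dyadic_Ioo_eq greaterThanLessThan_subseteq_greaterThanLessThan by auto
  show ?thesis unfolding emeasure_mu_dyadic_Ioo
  proof (rule mu_meas_doubling)
    show "0 \<le> dyadic_left a b k (j div 2)" using dyadic_left_ge[of a b k "j div 2"] assms by simp
    show "dyadic_left a b k (Suc (j div 2)) - dyadic_left a b k (j div 2) \<le> 2 * (dyadic_left a b (Suc k) (Suc j) - dyadic_left a b (Suc k) j)"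
      unfolding dyadic_left_Suc_diff by (simp add: field_simps)
  qed (use ends lt assms in auto)
qed

lemma mu_outer_regular:
  assumes ab: "0 \<le> a" "a < b" and lam: "0 \<le> lam"
    and E: "E \<in> sets borel" "E \<subseteq> {a<..<b}" and \<delta>: "0 < \<delta>"
  obtains V where "open V" "E \<subseteq> V" "V \<subseteq> {a<..<b}" "emeasure (mu_measure lam) (V - E) < ennreal \<delta>"
proof -
  define K where "K = b powr (2*lam)"
  have K: "0 \<le> K" unfolding K_def by simp
  obtain U where U: "open U" "E \<subseteq> U" "emeasure lborel (U - E) < \<delta> / (K + 1)"
    using outer_regular_lborel[OF E(1), of "\<delta> / (K + 1)"] \<delta> K by auto
  define V where "V = U \<inter> {a<..<b}"
  have "emeasure (mu_measure lam) (V - E) \<le> ennreal K * emeasure lborel (V - E)"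
    unfolding K_def V_def using U E ab by (intro emeasure_mu_le_lborel lam) auto
  also have "\<dots> \<le> ennreal K * ennreal (\<delta> / (K + 1))"
  proof (intro mult_left_mono)
    have "emeasure lborel (V - E) \<le> emeasure lborel (U - E)"
      unfolding V_def using U(1) E(1) by (intro emeasure_mono) auto
    thus "emeasure lborel (V - E) \<le> ennreal (\<delta> / (K + 1))" using U(3) by simp
  qed simp
  also have "\<dots> = ennreal (\<delta> * (K / (K + 1)))"
    using \<delta> K by (simp add: ennreal_mult[symmetric])
  also have "\<dots> < ennreal \<delta>"
    using \<delta> K by (intro ennreal_lessI) (simp_all add: field_simps)
  finally show ?thesis using U E by (intro that[of V]) (auto simp: V_def)
qed

lemma dyadic_density_point:
  assumes ab: "0 \<le> a" "a < b" and lam: "0 \<le> lam"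
    and E: "E \<in> sets borel" "E \<subseteq> {a<..<b}" "0 < emeasure (mu_measure lam) E" and \<epsilon>: "0 < \<epsilon>"
  shows "\<exists>k j. j < 2^k \<and> emeasure (mu_measure lam) (dyadic_Ioo a b k j - E)
                 < ennreal \<epsilon> * emeasure (mu_measure lam) (dyadic_Ioo a b k j)"
proof (rule ccontr)
  assume contra: "\<not> ?thesis"
  let ?\<mu> = "mu_measure lam"
  obtain mE where mE: "emeasure ?\<mu> E = ennreal mE" "0 < mE"
    using emeasure_mu_finite[OF E(2) ab lam] E(3) by (cases "emeasure ?\<mu> E") auto
  obtain V where V: "open V" "E \<subseteq> V" "V \<subseteq> {a<..<b}" "emeasure ?\<mu> (V - E) < ennreal (\<epsilon> * mE)"
    using mu_outer_regular[OF ab lam E(1,2), of "\<epsilon> * mE"] \<epsilon> mE(2) by auto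
  let ?M = "maximal_dyadic (\<lambda>k j. dyadic_Ioo a b k j \<subseteq> V)"
  let ?D = "\<lambda>i. dyadic_Ioo a b (fst i) (snd i)"
  define Y where "Y = (\<Union>i\<in>?M. ?D i)"
  have Y[measurable]: "Y \<in> sets borel" unfolding Y_def by measurable
  have "E - dyadic_grid a b \<subseteq> Y"
    using open_subset_UN_maximal_dyadic[OF ab(2) V(1)] V(2,3) unfolding Y_def by blast
  hence "emeasure ?\<mu> E \<le> emeasure ?\<mu> (Y \<union> dyadic_grid a b)"
    using null_setsD2[OF dyadic_grid_null] by (intro emeasure_mono) auto
  also have "\<dots> = emeasure ?\<mu> Y"
    using null_sets_mu_measure[OF dyadic_grid_null] by (intro emeasure_Un_null_set) auto
  finally have EY: "emeasure ?\<mu> E \<le> emeasure ?\<mu> Y" .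
  have "ennreal \<epsilon> * emeasure ?\<mu> Y = (\<integral>\<^sup>+i. ennreal \<epsilon> * emeasure ?\<mu> (?D i) \<partial>count_space ?M)"
    unfolding Y_def by (simp add: emeasure_UN_maximal_dyadic[OF ab(2)] nn_integral_cmult)
  also have "\<dots> \<le> (\<integral>\<^sup>+i. emeasure ?\<mu> (?D i - E) \<partial>count_space ?M)"
  proof (intro nn_integral_mono)
    fix i assume "i \<in> space (count_space ?M)"
    hence "snd i < 2 ^ fst i" by (simp add: maximal_dyadic_index_less)
    thus "ennreal \<epsilon> * emeasure ?\<mu> (?D i) \<le> emeasure ?\<mu> (?D i - E)"
      using contra by (meson not_le)
  qed
  also have "\<dots> = emeasure ?\<mu> (\<Union>i\<in>?M. ?D i - E)"
  proof -
    have "disjoint_family_on (\<lambda>i. ?D i - E) ?M"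
      using disjoint_family_maximal_dyadic[OF ab(2)] unfolding disjoint_family_on_def by blast
    thus ?thesis using E(1) by (intro emeasure_UN_countable[symmetric] countable_maximal_dyadic) auto
  qed
  also have "\<dots> \<le> emeasure ?\<mu> (V - E)"
  proof (intro emeasure_mono)
    show "(\<Union>i\<in>?M. ?D i - E) \<subseteq> V - E"
      using maximal_dyadic_holds[where P="\<lambda>k j. dyadic_Ioo a b k j \<subseteq> V"] by blast
  qed (use V(1) E(1) in auto)
  also have "\<dots> < ennreal \<epsilon> * emeasure ?\<mu> E"
    using V(4) mE \<epsilon> by (simp add: ennreal_mult)
  also have "\<dots> \<le> ennreal \<epsilon> * emeasure ?\<mu> Y"
    using EY by (rule mult_left_mono) simp
  finally show False by simp
qed

lemma nn_set_integral_mu_measure: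
  assumes "g \<in> borel_measurable borel" "\<And>x. 0 \<le> g x" "A \<in> sets borel"
  shows "(\<integral>\<^sup>+x\<in>A. ennreal (g x) \<partial>mu_measure lam) = (\<integral>\<^sup>+t\<in>A. ennreal (g t * t powr (2*lam)) \<partial>lborel)"
proof -
  have "(\<integral>\<^sup>+x\<in>A. ennreal (g x) \<partial>mu_measure lam) = (\<integral>\<^sup>+t. ennreal (t powr (2*lam)) * (ennreal (g t) * indicator A t) \<partial>lborel)"
    using assms by (subst nn_integral_mu_measure) auto
  also have "\<dots> = (\<integral>\<^sup>+t\<in>A. ennreal (g t * t powr (2*lam)) \<partial>lborel)"
    using assms(2) by (intro nn_integral_cong) (simp add: ennreal_mult' mult_ac)
  finally show ?thesis .
qed

lemma power_weight_set_integrable: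
  assumes "0 \<le> u" "u < v" "0 \<le> lam"
  shows "set_integrable lborel {u<..<v} (\<lambda>t. t powr (2*lam))"
    "(LINT t:{u<..<v}|lborel. t powr (2*lam)) = enn2real (mu_meas lam u v)"
proof -
  have nn: "(\<integral>\<^sup>+t. ennreal (indicator {u<..<v} t *\<^sub>R t powr (2*lam)) \<partial>lborel) = mu_meas lam u v"
    unfolding mu_meas_def by (intro nn_integral_cong) (auto simp: indicator_def)
  show si: "set_integrable lborel {u<..<v} (\<lambda>t. t powr (2*lam))"
    unfolding set_integrable_def
    by (rule integrableI_nonneg) (use nn mu_meas_finite[OF assms] in auto)
  have "ennreal (LINT t:{u<..<v}|lborel. t powr (2*lam)) = mu_meas lam u v"
    unfolding set_lebesgue_integral_def nn[symmetric] using si unfolding set_integrable_def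
    by (subst nn_integral_eq_integral) auto
  moreover have "0 \<le> (LINT t:{u<..<v}|lborel. t powr (2*lam))"
    unfolding set_lebesgue_integral_def by (intro integral_nonneg_AE AE_I2) (auto simp: indicator_def)
  ultimately show "(LINT t:{u<..<v}|lborel. t powr (2*lam)) = enn2real (mu_meas lam u v)"
    by (metis enn2real_ennreal)
qed

lemma mu_avg_dist_le:
  assumes uv: "0 \<le> u" "u < v" and lam: "0 \<le> lam"
    and fi: "set_integrable lborel {u<..<v} (\<lambda>t. f t * t powr (2*lam))"
    and bd: "(\<integral>\<^sup>+t\<in>{u<..<v}. ennreal (\<bar>f t - c\<bar> * t powr (2*lam)) \<partial>lborel) \<le> ennreal K * mu_meas lam u v"
    and K: "0 \<le> K"
  shows "\<bar>mu_avg lam f u v - c\<bar> \<le> K"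
proof -
  define A where "A = {u<..<v}"
  define m where "m = enn2real (mu_meas lam u v)"
  have m0: "0 < m" unfolding m_def using mu_meas_real_pos[OF uv lam] .
  have mm: "mu_meas lam u v = ennreal m" unfolding m_def
    using mu_meas_finite[OF uv lam] by (simp add: less_top)
  note ri = power_weight_set_integrable[OF uv lam]
  define F where "F = (LINT t:A|lborel. f t * t powr (2*lam))"
  have avg: "mu_avg lam f u v = F / m" unfolding mu_avg_def F_def A_def m_def ..
  have si2: "set_integrable lborel A (\<lambda>t. c * t powr (2*lam))" using ri(1) unfolding A_def by simp
  have "F - c * m = (LINT t:A|lborel. f t * t powr (2*lam) - c * t powr (2*lam))"
    unfolding F_def using fi si2 ri(2) unfolding A_def m_def by (subst set_integral_diff(2)) auto
  also have "\<dots> = integral\<^sup>L lborel (\<lambda>t. indicator A t *\<^sub>R ((f t - c) * t powr (2*lam)))"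
    unfolding set_lebesgue_integral_def by (simp add: algebra_simps)
  finally have eq: "F - c * m = integral\<^sup>L lborel (\<lambda>t. indicator A t *\<^sub>R ((f t - c) * t powr (2*lam)))" .
  have int3: "integrable lborel (\<lambda>t. indicator A t *\<^sub>R ((f t - c) * t powr (2*lam)))"
  proof -
    have "set_integrable lborel A (\<lambda>t. f t * t powr (2*lam) - c * t powr (2*lam))"
      using fi si2 unfolding A_def by (rule set_integral_diff(1))
    thus ?thesis unfolding set_integrable_def by (simp add: algebra_simps)
  qed
  have "ennreal \<bar>F - c * m\<bar> \<le> (\<integral>\<^sup>+t. norm (indicator A t *\<^sub>R ((f t - c) * t powr (2*lam))) \<partial>lborel)"
    unfolding eq using integral_norm_bound_ennreal[OF int3] by simp
  also have "\<dots> = (\<integral>\<^sup>+t\<in>A. ennreal (\<bar>f t - c\<bar> * t powr (2*lam)) \<partial>lborel)"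
    by (intro nn_integral_cong) (auto simp: indicator_def abs_mult)
  also have "\<dots> \<le> ennreal (K * m)" using bd unfolding A_def mm using K less_imp_le[OF m0] by (simp add: ennreal_mult)
  finally have "\<bar>F - c * m\<bar> \<le> K * m" using K m0 by (subst (asm) ennreal_le_iff) auto
  hence "\<bar>F - c * m\<bar> / m \<le> K" using m0 by (simp add: divide_le_eq)
  moreover have "\<bar>F - c * m\<bar> / m = \<bar>F / m - c\<bar>" using m0 by (simp add: field_simps)
  ultimately show ?thesis unfolding avg by simp
qed

section \<open>The Calder\'on--Zygmund decomposition\<close>

lemma emeasure_density_mu_measure:
  assumes "g \<in> borel_measurable borel" "A \<in> sets borel"
  shows "emeasure (density (mu_measure lam) g) A = (\<integral>\<^sup>+x\<in>A. g x \<partial>mu_measure lam)"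
  using assms by (subst emeasure_density) auto

definition cz_selected :: "real \<Rightarrow> (real \<Rightarrow> real) \<Rightarrow> real \<Rightarrow> real \<Rightarrow> real \<Rightarrow> nat \<Rightarrow> nat \<Rightarrow> bool" where
  "cz_selected lam g N a b k j \<longleftrightarrow>
     ennreal (2*N) * emeasure (mu_measure lam) (dyadic_Ioo a b k j)
       < (\<integral>\<^sup>+x\<in>dyadic_Ioo a b k j. ennreal (g x) \<partial>mu_measure lam)"

context
  fixes lam a b N :: real and g :: "real \<Rightarrow> real"
  assumes ab: "0 \<le> a" "a < b" and lam: "0 \<le> lam" and N: "0 < N"
    and g_borel[measurable]: "g \<in> borel_measurable borel"
    and mean_le: "(\<integral>\<^sup>+x\<in>{a<..<b}. ennreal (g x) \<partial>mu_measure lam) \<le> ennreal N * emeasure (mu_measure lam) {a<..<b}"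
begin

lemma cz_root_not_selected: "\<not> cz_selected lam g N a b 0 0"
proof
  assume "cz_selected lam g N a b 0 0"
  hence "ennreal (2*N) * emeasure (mu_measure lam) {a<..<b} < ennreal N * emeasure (mu_measure lam) {a<..<b}"
    using mean_le unfolding cz_selected_def dyadic_Ioo_0 by (rule less_le_trans)
  moreover have "ennreal N * emeasure (mu_measure lam) {a<..<b} \<le> ennreal (2*N) * emeasure (mu_measure lam) {a<..<b}"
    using N by (intro mult_right_mono ennreal_leI) auto
  ultimately show False by simp
qed

lemma cz_selected_measure:
  "2 * emeasure (mu_measure lam) (\<Union>i\<in>maximal_dyadic (cz_selected lam g N a b). dyadic_Ioo a b (fst i) (snd i))
     \<le> emeasure (mu_measure lam) {a<..<b}"
proof -
  let ?\<mu> = "mu_measure lam" and ?\<nu> = "density (mu_measure lam) (\<lambda>x. ennreal (g x))"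
  let ?M = "maximal_dyadic (cz_selected lam g N a b)" and ?D = "\<lambda>i. dyadic_Ioo a b (fst i) (snd i)"
  have "ennreal N * (2 * emeasure ?\<mu> (\<Union>i\<in>?M. ?D i)) = (\<integral>\<^sup>+i. ennreal (2*N) * emeasure ?\<mu> (?D i) \<partial>count_space ?M)"
    using N by (simp add: emeasure_UN_maximal_dyadic[OF ab(2)] nn_integral_cmult ennreal_mult mult_ac)
  also have "\<dots> \<le> (\<integral>\<^sup>+i. emeasure ?\<nu> (?D i) \<partial>count_space ?M)"
  proof (intro nn_integral_mono)
    fix i assume "i \<in> space (count_space ?M)"
    hence "cz_selected lam g N a b (fst i) (snd i)" by (simp add: maximal_dyadic_holds)
    thus "ennreal (2*N) * emeasure ?\<mu> (?D i) \<le> emeasure ?\<nu> (?D i)"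
      unfolding cz_selected_def by (simp add: emeasure_density_mu_measure)
  qed
  also have "\<dots> = emeasure ?\<nu> (\<Union>i\<in>?M. ?D i)"
    by (simp add: emeasure_UN_maximal_dyadic[OF ab(2)])
  also have "\<dots> \<le> emeasure ?\<nu> {a<..<b}"
    using UN_maximal_dyadic_subset[OF ab(2)] by (intro emeasure_mono) auto
  also have "\<dots> \<le> ennreal N * emeasure ?\<mu> {a<..<b}"
    using mean_le by (simp add: emeasure_density_mu_measure)
  finally show ?thesis using N by (subst (asm) ennreal_mult_le_mult_iff) auto
qed

text \<open>A selected interval was not selected at its parent, and \<open>\<mu>\<close> is doubling.\<close>

lemma cz_selected_mean:
  assumes i: "i \<in> maximal_dyadic (cz_selected lam g N a b)"
  shows "(\<integral>\<^sup>+x\<in>dyadic_Ioo a b (fst i) (snd i). ennreal (g x) \<partial>mu_measure lam)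
    \<le> ennreal (2 * N * doubling_const lam) * emeasure (mu_measure lam) (dyadic_Ioo a b (fst i) (snd i))"
proof -
  let ?\<mu> = "mu_measure lam"
  obtain k j where kj: "i = (k, j)" by (cases i)
  have jk: "j < 2^k" and sel: "cz_selected lam g N a b k j"
    and anc: "\<And>k'. k' < k \<Longrightarrow> \<not> cz_selected lam g N a b k' (j div 2^(k-k'))"
    using i unfolding kj maximal_dyadic_def by auto
  have "k \<noteq> 0" using jk sel cz_root_not_selected by (cases "k = 0") auto
  then obtain k0 where k: "k = Suc k0" using not0_implies_Suc by blast
  have "(\<integral>\<^sup>+x\<in>dyadic_Ioo a b k j. ennreal (g x) \<partial>?\<mu>) \<le> (\<integral>\<^sup>+x\<in>dyadic_Ioo a b k0 (j div 2). ennreal (g x) \<partial>?\<mu>)"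
    using dyadic_Ioo_subset_ancestor[OF ab(2), of k0 k j] k by (intro nn_set_integral_set_mono) simp
  also have "\<dots> \<le> ennreal (2*N) * emeasure ?\<mu> (dyadic_Ioo a b k0 (j div 2))"
    using anc[of k0] k unfolding cz_selected_def by (simp add: not_less)
  also have "\<dots> \<le> ennreal (2*N) * (ennreal (doubling_const lam) * emeasure ?\<mu> (dyadic_Ioo a b k j))"
    unfolding k using emeasure_dyadic_parent_le[OF ab lam, of k0 j] by (rule mult_left_mono) simp
  also have "\<dots> = ennreal (2 * N * doubling_const lam) * emeasure ?\<mu> (dyadic_Ioo a b k j)"
    using N doubling_const_ge_1[OF lam] by (simp add: ennreal_mult mult.assoc)
  finally show ?thesis unfolding kj by simp
qed

text \<open>Off the selected intervals \<open>g \<le> 3 N\<close> almost everywhere: at a density point of the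
  exceptional set the stopping rule would have selected the interval.\<close>

lemma cz_exceptional_null:
  "{x\<in>{a<..<b}. 3*N < g x} - (\<Union>i\<in>maximal_dyadic (cz_selected lam g N a b). dyadic_Ioo a b (fst i) (snd i))
     \<in> null_sets lborel"
proof -
  let ?\<mu> = "mu_measure lam"
  define E where "E = {x\<in>{a<..<b}. 3*N < g x} - (\<Union>i\<in>maximal_dyadic (cz_selected lam g N a b). dyadic_Ioo a b (fst i) (snd i))"
  have E_borel[measurable]: "E \<in> sets borel" unfolding E_def by measurable
  have "emeasure ?\<mu> E = 0"
  proof (rule ccontr)
    assume "emeasure ?\<mu> E \<noteq> 0"
    moreover have "E \<subseteq> {a<..<b}" unfolding E_def by auto
    ultimately obtain k j where jk: "j < 2^k"
      and dense: "emeasure ?\<mu> (dyadic_Ioo a b k j - E) < ennreal (1/3) * emeasure ?\<mu> (dyadic_Ioo a b k j)"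
      using dyadic_density_point[OF ab lam E_borel, of "1/3"] by (auto simp: zero_less_iff_neq_zero)
    let ?D = "dyadic_Ioo a b k j"
    have D: "0 < emeasure ?\<mu> ?D" "emeasure ?\<mu> ?D < \<infinity>" using emeasure_dyadic_Ioo[OF ab lam] by auto
    have "\<not> cz_selected lam g N a b k j"
    proof
      assume "cz_selected lam g N a b k j"
      then obtain k' j' where "(k', j') \<in> maximal_dyadic (cz_selected lam g N a b)" "?D \<subseteq> dyadic_Ioo a b k' j'"
        using maximal_dyadic_cover[where P="cz_selected lam g N a b", OF ab(2) jk] by blast
      hence "?D - E = ?D" unfolding E_def by force
      hence "emeasure ?\<mu> ?D < ennreal (1/3) * emeasure ?\<mu> ?D" using dense by simp
      moreover have "ennreal (1/3) * emeasure ?\<mu> ?D \<le> 1 * emeasure ?\<mu> ?D"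
        by (intro mult_right_mono) auto
      ultimately show False by simp
    qed
    hence "(\<integral>\<^sup>+x\<in>?D. ennreal (g x) \<partial>?\<mu>) \<le> ennreal (2*N) * emeasure ?\<mu> ?D"
      unfolding cz_selected_def by (simp add: not_less)
    also have "\<dots> < ennreal (3*N) * emeasure ?\<mu> (?D \<inter> E)"
      using D N dense by (intro emeasure_Int_large) auto
    also have "\<dots> = (\<integral>\<^sup>+x\<in>?D \<inter> E. ennreal (3*N) \<partial>?\<mu>)"
      by (simp add: nn_integral_cmult_indicator)
    also have "\<dots> \<le> (\<integral>\<^sup>+x\<in>?D. ennreal (g x) \<partial>?\<mu>)"
      by (intro nn_integral_mono) (auto simp: E_def indicator_def intro!: ennreal_leI)
    finally show False by simp
  qed
  thus ?thesis using E_borel ab unfolding E_def by (intro null_sets_lborel_of_mu[where lam=lam]) auto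
qed

end

section \<open>Weights\<close>

lemma is_weight_measurable: "is_weight w \<Longrightarrow> w \<in> borel_measurable borel"
  unfolding is_weight_def by simp

definition w_measure :: "(real \<Rightarrow> real) \<Rightarrow> real measure" where
  "w_measure w = density lborel (\<lambda>t. ennreal (w t))"

lemma sets_w_measure[simp, measurable_cong]: "sets (w_measure w) = sets borel"
  unfolding w_measure_def by simp

lemma space_w_measure[simp]: "space (w_measure w) = UNIV"
  unfolding w_measure_def by simp

lemma w_meas_eq_emeasure: "w \<in> borel_measurable borel \<Longrightarrow> w_meas w a b = emeasure (w_measure w) {a<..<b}"
  unfolding w_meas_def w_measure_def by (subst emeasure_density) auto

lemma emeasure_w_measure:
  "w \<in> borel_measurable borel \<Longrightarrow> A \<in> sets borel \<Longrightarrow> emeasure (w_measure w) A = (\<integral>\<^sup>+x\<in>A. ennreal (w x) \<partial>lborel)"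
  unfolding w_measure_def by (subst emeasure_density) auto

lemma null_sets_w_measure: "w \<in> borel_measurable borel \<Longrightarrow> A \<in> null_sets lborel \<Longrightarrow> A \<in> null_sets (w_measure w)"
  unfolding w_measure_def
  by (subst null_sets_density_iff) (auto dest: AE_not_in elim!: AE_mp)

lemma w_meas_pos:
  assumes w: "is_weight w" and ab: "0 \<le> a" "a < b"
  shows "0 < w_meas w a b"
proof (rule ccontr)
  assume "\<not> 0 < w_meas w a b"
  hence z: "w_meas w a b = 0" by (simp add: zero_less_iff_neq_zero)
  have wm[measurable]: "w \<in> borel_measurable borel" using w by (rule is_weight_measurable)
  have wpos: "AE t in lborel. 0 < t \<longrightarrow> 0 < w t" using w unfolding is_weight_def by simp
  have "AE t in lborel. ennreal (w t) * indicator {a<..<b} t = 0"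
    using z unfolding w_meas_def by (subst nn_integral_0_iff_AE[symmetric]) auto
  hence "AE t in lborel. t \<notin> {a<..<b}" using wpos
    by eventually_elim (use ab in \<open>auto simp: indicator_def split: if_splits\<close>)
  hence "{a<..<b} \<in> null_sets lborel" by (subst AE_iff_null_sets) auto
  thus False using ab by auto
qed

definition dual_weight_integral :: "real \<Rightarrow> real \<Rightarrow> (real \<Rightarrow> real) \<Rightarrow> real set \<Rightarrow> ennreal" where
  "dual_weight_integral lam r w A = (\<integral>\<^sup>+t\<in>A. ennreal (t powr (2*lam*(r/(r-1))) * w t powr (-1/(r-1))) \<partial>lborel)"

lemma Holder_mu_measure:
  assumes r: "1 < r" and wm[measurable]: "w \<in> borel_measurable borel"
    and wpos: "AE t in lborel. 0 < t \<longrightarrow> 0 < w t"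
    and hm[measurable]: "h \<in> borel_measurable borel" and h0: "\<And>x. 0 \<le> h x"
    and I[measurable]: "I \<in> sets borel" and Ipos: "I \<subseteq> {0<..}"
    and fin1: "(\<integral>\<^sup>+x\<in>I. ennreal (h x powr r * w x) \<partial>lborel) < \<infinity>"
    and fin2: "dual_weight_integral lam r w I < \<infinity>"
  shows "(\<integral>\<^sup>+x\<in>I. ennreal (h x * x powr (2*lam)) \<partial>lborel)
     \<le> ennreal (enn2real (\<integral>\<^sup>+x\<in>I. ennreal (h x powr r * w x) \<partial>lborel) powr (1/r) * enn2real (dual_weight_integral lam r w I) powr (1 - 1/r))"
proof -
  define q where "q = r/(r-1)"
  have q: "1 < q" "1/r + 1/q = 1" "1/q = 1 - 1/r" unfolding q_def using r by (auto simp: field_simps)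
  define F where "F = (\<lambda>x. indicator I x * (h x * w x powr (1/r)))"
  define G where "G = (\<lambda>x. indicator I x * (w x powr (-1/r) * x powr (2*lam)))"
  have Fm[measurable]: "F \<in> borel_measurable lborel" unfolding F_def by measurable
  have Gm[measurable]: "G \<in> borel_measurable lborel" unfolding G_def by measurable
  have F0: "\<And>x. 0 \<le> F x" unfolding F_def using h0 by simp
  have G0: "\<And>x. 0 \<le> G x" unfolding G_def by simp
  have wpos': "AE x in lborel. x \<in> I \<longrightarrow> 0 < w x" using wpos by (rule AE_mp) (use Ipos in auto)
  have eFG: "(\<integral>\<^sup>+x. ennreal (F x * G x) \<partial>lborel) = (\<integral>\<^sup>+x\<in>I. ennreal (h x * x powr (2*lam)) \<partial>lborel)"
  proof (intro nn_integral_cong_AE, rule AE_mp[OF wpos'], intro AE_I2 impI)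
    fix x assume h: "x \<in> I \<longrightarrow> 0 < w x"
    show "ennreal (F x * G x) = ennreal (h x * x powr (2*lam)) * indicator I x"
    proof (cases "x \<in> I")
      case True
      hence wx: "0 < w x" using h by simp
      have "w x powr (1/r) * w x powr (-1/r) = 1" using wx by (simp add: powr_add[symmetric])
      hence "F x * G x = h x * x powr (2*lam)" unfolding F_def G_def using True
        by (simp add: mult_ac)
      thus ?thesis using True by simp
    qed (simp add: F_def G_def)
  qed
  have eF: "(\<integral>\<^sup>+x. ennreal (F x powr r) \<partial>lborel) = (\<integral>\<^sup>+x\<in>I. ennreal (h x powr r * w x) \<partial>lborel)"
  proof (intro nn_integral_cong_AE, rule AE_mp[OF wpos'], intro AE_I2 impI)
    fix x assume h: "x \<in> I \<longrightarrow> 0 < w x"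
    show "ennreal (F x powr r) = ennreal (h x powr r * w x) * indicator I x"
    proof (cases "x \<in> I")
      case True
      hence wx: "0 < w x" using h by simp
      have "F x powr r = h x powr r * (w x powr (1/r)) powr r" unfolding F_def using True h0
        by (simp add: powr_mult)
      also have "(w x powr (1/r)) powr r = w x" using wx r by (simp add: powr_powr)
      finally show ?thesis using True by simp
    qed (use r in \<open>simp add: F_def\<close>)
  qed
  have eG: "(\<integral>\<^sup>+x. ennreal (G x powr q) \<partial>lborel) = dual_weight_integral lam r w I"
    unfolding dual_weight_integral_def
  proof (intro nn_integral_cong)
    fix x
    show "ennreal (G x powr q) = ennreal (x powr (2*lam*(r/(r-1))) * w x powr (-1/(r-1))) * indicator I x"
    proof (cases "x \<in> I")
      case True
      have x0: "0 < x" using True Ipos by auto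
      have "G x powr q = (w x powr (-1/r)) powr q * (x powr (2*lam)) powr q" unfolding G_def using True
        by (simp add: powr_mult)
      also have "(w x powr (-1/r)) powr q = w x powr (-1/(r-1))"
        unfolding q_def using r by (simp add: powr_powr field_simps)
      also have "(x powr (2*lam)) powr q = x powr (2*lam*(r/(r-1)))"
        unfolding q_def by (simp add: powr_powr)
      finally show ?thesis using True by (simp add: mult.commute)
    qed (use q in \<open>simp add: G_def\<close>)
  qed
  have "(\<integral>\<^sup>+x\<in>I. ennreal (h x * x powr (2*lam)) \<partial>lborel) = (\<integral>\<^sup>+x. ennreal (F x * G x) \<partial>lborel)"
    using eFG by simp
  also have "\<dots> \<le> ennreal (enn2real (\<integral>\<^sup>+x. ennreal (F x powr r) \<partial>lborel) powr (1/r) * enn2real (\<integral>\<^sup>+x. ennreal (G x powr q) \<partial>lborel) powr (1/q))"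
    using fin1 fin2 unfolding eF[symmetric] eG[symmetric]
    by (intro Holder_nn_integral[OF r q(1) q(2) Fm Gm F0 G0]) auto
  finally show ?thesis unfolding eF eG q(3) .
qed

lemma emeasure_mu_Holder:
  assumes r: "1 < r" and w[measurable]: "w \<in> borel_measurable borel"
    and wpos: "AE t in lborel. 0 < t \<longrightarrow> 0 < w t"
    and F[measurable]: "F \<in> sets borel" and Fpos: "F \<subseteq> {0<..}"
    and fin: "emeasure (w_measure w) F < \<infinity>" "dual_weight_integral lam r w F < \<infinity>"
  shows "enn2real (emeasure (mu_measure lam) F) powr r
    \<le> enn2real (emeasure (w_measure w) F) * enn2real (dual_weight_integral lam r w F) powr (r - 1)"
proof -
  define mF where "mF = enn2real (emeasure (mu_measure lam) F)"
  define WF where "WF = enn2real (emeasure (w_measure w) F)"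
  define SF where "SF = enn2real (dual_weight_integral lam r w F)"
  have nn: "0 \<le> mF" "0 \<le> WF" "0 \<le> SF" unfolding mF_def WF_def SF_def by auto
  have "emeasure (mu_measure lam) F \<le> ennreal (WF powr (1/r) * SF powr (1 - 1/r))"
    using Holder_mu_measure[OF r w wpos measurable_const zero_le_one F Fpos] fin
    unfolding WF_def SF_def by (simp add: emeasure_mu_measure emeasure_w_measure)
  hence "mF \<le> WF powr (1/r) * SF powr (1 - 1/r)" unfolding mF_def by (simp add: enn2real_leI)
  hence "mF powr r \<le> (WF powr (1/r) * SF powr (1 - 1/r)) powr r"
    using r nn by (intro powr_mono2) auto
  also have "\<dots> = WF powr ((1/r) * r) * SF powr ((1 - 1/r) * r)"
    by (simp add: powr_mult powr_powr)
  also have "\<dots> = WF * SF powr (r - 1)"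
  proof -
    have "(1/r) * r = 1" "(1 - 1/r) * r = r - 1" using r by (simp_all add: field_simps)
    thus ?thesis using nn(2) by simp
  qed
  finally show ?thesis unfolding mF_def WF_def SF_def .
qed

lemma Ap_tilde_bound:
  assumes lam: "0 \<le> lam" and r: "1 < r" and Ap: "Ap_tilde lam r w"
  obtains C where "0 \<le> C" "\<And>a b. 0 \<le> a \<Longrightarrow> a < b \<Longrightarrow> w_meas w a b < \<infinity> \<and> dual_weight_integral lam r w {a<..<b} < \<infinity> \<and>
     enn2real (w_meas w a b) * enn2real (dual_weight_integral lam r w {a<..<b}) powr (r-1) \<le> C * enn2real (mu_meas lam a b) powr r"
proof -
  from Ap obtain C where C: "\<And>a b. 0 \<le> a \<Longrightarrow> a < b \<Longrightarrow> w_meas w a b < \<infinity> \<and> dual_weight_integral lam r w {a<..<b} < \<infinity> \<and>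
        (enn2real (w_meas w a b) / enn2real (mu_meas lam a b)) *
        (enn2real (dual_weight_integral lam r w {a<..<b}) / enn2real (mu_meas lam a b)) powr (r - 1) \<le> C"
    unfolding Ap_tilde_def dual_weight_integral_def by blast
  have C0: "0 \<le> C" using C[of 0 1] by (smt (verit) divide_nonneg_nonneg enn2real_nonneg powr_ge_zero zero_le_mult_iff)
  show ?thesis
  proof (rule that[OF C0])
    fix a b :: real assume ab: "0 \<le> a" "a < b"
    define W where "W = enn2real (w_meas w a b)"
    define S where "S = enn2real (dual_weight_integral lam r w {a<..<b})"
    define m where "m = enn2real (mu_meas lam a b)"
    have m0: "0 < m" unfolding m_def using mu_meas_real[OF ab lam] by simp
    have W0: "0 \<le> W" "0 \<le> S" unfolding W_def S_def by auto
    have h: "(W / m) * (S / m) powr (r - 1) \<le> C" using C[OF ab] unfolding W_def S_def m_def by simp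
    have e: "(W / m) * (S / m) powr (r - 1) = (W * S powr (r-1)) / m powr r"
    proof -
      have "m powr r = m powr (1 + (r - 1))" by simp
      also have "\<dots> = m powr 1 * m powr (r - 1)" by (rule powr_add)
      finally have "m powr r = m * m powr (r - 1)" using m0 by (simp add: powr_one)
      thus ?thesis by (simp add: powr_divide)
    qed
    have "W * S powr (r-1) \<le> C * m powr r" using h m0 unfolding e by (simp add: divide_le_eq)
    thus "w_meas w a b < \<infinity> \<and> dual_weight_integral lam r w {a<..<b} < \<infinity> \<and>
     enn2real (w_meas w a b) * enn2real (dual_weight_integral lam r w {a<..<b}) powr (r-1) \<le> C * enn2real (mu_meas lam a b) powr r"
      using C[OF ab] unfolding W_def S_def m_def by simp
  qed
qed

text \<open>The multiplicative form of \<open>(\<mu>(F) / \<mu>(I))\<^sup>r \<le> C w(F) / w(I)\<close> for \<open>F \<subseteq> I\<close>.\<close>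

definition weight_fraction_bound :: "real \<Rightarrow> real \<Rightarrow> (real \<Rightarrow> real) \<Rightarrow> real \<Rightarrow> bool" where
  "weight_fraction_bound lam r w C \<longleftrightarrow> (\<forall>a b F. 0 \<le> a \<longrightarrow> a < b \<longrightarrow> F \<in> sets borel \<longrightarrow> F \<subseteq> {a<..<b} \<longrightarrow>
      enn2real (emeasure (mu_measure lam) F) powr r * enn2real (w_meas w a b)
        \<le> C * enn2real (emeasure (w_measure w) F) * enn2real (mu_meas lam a b) powr r)"

lemma Ap_tilde_weight_fraction_bound:
  assumes lam: "0 \<le> lam" and r: "1 < r" and w: "is_weight w" and Ap: "Ap_tilde lam r w"
  obtains C where "0 \<le> C" "\<And>a b. 0 \<le> a \<Longrightarrow> a < b \<Longrightarrow> w_meas w a b < \<infinity>" "weight_fraction_bound lam r w C"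
proof -
  have wm[measurable]: "w \<in> borel_measurable borel" using w by (rule is_weight_measurable)
  have wpos: "AE t in lborel. 0 < t \<longrightarrow> 0 < w t" using w unfolding is_weight_def by simp
  obtain C where C0: "0 \<le> C" and C: "\<And>a b. 0 \<le> a \<Longrightarrow> a < b \<Longrightarrow> w_meas w a b < \<infinity> \<and> dual_weight_integral lam r w {a<..<b} < \<infinity> \<and>
     enn2real (w_meas w a b) * enn2real (dual_weight_integral lam r w {a<..<b}) powr (r-1) \<le> C * enn2real (mu_meas lam a b) powr r"
    using Ap_tilde_bound[OF lam r Ap] by blast
  show ?thesis
  proof (rule that[OF C0])
    show "\<And>a b. 0 \<le> a \<Longrightarrow> a < b \<Longrightarrow> w_meas w a b < \<infinity>" using C by blast
    show "weight_fraction_bound lam r w C" unfolding weight_fraction_bound_def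
    proof (intro allI impI)
      fix a b :: real and F :: "real set" assume ab: "0 \<le> a" "a < b" and F: "F \<in> sets borel" "F \<subseteq> {a<..<b}"
      define SI where "SI = enn2real (dual_weight_integral lam r w {a<..<b})"
      have Ap_ab: "w_meas w a b < \<infinity>" "dual_weight_integral lam r w {a<..<b} < \<infinity>"
        "enn2real (w_meas w a b) * SI powr (r-1) \<le> C * enn2real (mu_meas lam a b) powr r"
        using C[OF ab] unfolding SI_def by auto
      have WF: "emeasure (w_measure w) F < \<infinity>"
        using emeasure_mono[of F "{a<..<b}" "w_measure w"] F Ap_ab(1) by (simp add: w_meas_eq_emeasure le_less_trans)
      have SF: "dual_weight_integral lam r w F \<le> dual_weight_integral lam r w {a<..<b}"
        unfolding dual_weight_integral_def using F by (intro nn_set_integral_set_mono) auto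
      hence "enn2real (dual_weight_integral lam r w F) powr (r - 1) \<le> SI powr (r - 1)"
        using Ap_ab(2) r unfolding SI_def by (intro powr_mono2) (auto simp: enn2real_mono)
      hence "enn2real (emeasure (w_measure w) F) * enn2real (dual_weight_integral lam r w F) powr (r - 1)
          \<le> enn2real (emeasure (w_measure w) F) * SI powr (r - 1)"
        by (intro mult_left_mono) auto
      moreover have "F \<subseteq> {0<..}" using F(2) ab(1) by fastforce
      ultimately have "enn2real (emeasure (mu_measure lam) F) powr r \<le> enn2real (emeasure (w_measure w) F) * SI powr (r - 1)"
        using emeasure_mu_Holder[OF r wm wpos F(1) _ WF] SF Ap_ab(2) by (meson le_less_trans order_trans)
      hence "enn2real (emeasure (mu_measure lam) F) powr r * enn2real (w_meas w a b)
          \<le> enn2real (emeasure (w_measure w) F) * SI powr (r - 1) * enn2real (w_meas w a b)"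
        by (rule mult_right_mono) simp
      also have "\<dots> = enn2real (emeasure (w_measure w) F) * (enn2real (w_meas w a b) * SI powr (r - 1))"
        by (simp add: mult_ac)
      also have "\<dots> \<le> enn2real (emeasure (w_measure w) F) * (C * enn2real (mu_meas lam a b) powr r)"
        using Ap_ab(3) by (intro mult_left_mono) auto
      finally show "enn2real (emeasure (mu_measure lam) F) powr r * enn2real (w_meas w a b)
        \<le> C * enn2real (emeasure (w_measure w) F) * enn2real (mu_meas lam a b) powr r"
        by (simp add: mult_ac)
    qed
  qed
qed

lemma A1_tilde_pointwise:
  assumes lam: "0 \<le> lam" and w: "is_weight w" and A1: "A1_tilde lam w"
  obtains C where "0 \<le> C" "\<And>a b. 0 \<le> a \<Longrightarrow> a < b \<Longrightarrow> w_meas w a b < \<infinity>"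
    "\<And>a b. 0 \<le> a \<Longrightarrow> a < b \<Longrightarrow> AE x in lborel. x \<in> {a<..<b} \<longrightarrow>
        enn2real (w_meas w a b) / enn2real (mu_meas lam a b) * x powr (2*lam) \<le> C * w x"
proof -
  from A1 obtain C where C: "\<And>a b. 0 \<le> a \<Longrightarrow> a < b \<Longrightarrow> AE x in lborel. x \<in> {a<..<b} \<longrightarrow>
           w_meas w a b / mu_meas lam a b \<le> ennreal (C * w x / x powr (2*lam))"
    unfolding A1_tilde_def by blast
  define C0 where "C0 = max C 0"
  have wpos: "AE t in lborel. 0 < t \<longrightarrow> 0 < w t" using w unfolding is_weight_def by simp
  have fin: "w_meas w a b < \<infinity>" if ab: "0 \<le> a" "a < b" for a b
  proof (rule ccontr)
    assume "\<not> w_meas w a b < \<infinity>"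
    hence top: "w_meas w a b = \<infinity>" by (simp add: not_less top_unique)
    have "mu_meas lam a b \<noteq> \<infinity>" using mu_meas_finite[OF ab lam] by simp
    hence "w_meas w a b / mu_meas lam a b = \<infinity>" using top by (simp add: ennreal_top_divide)
    hence "AE x in lborel. x \<notin> {a<..<b}" using C[OF ab] by (rule_tac AE_mp) (auto intro!: AE_I2 simp: top_unique)
    hence "{a<..<b} \<in> null_sets lborel" by (subst AE_iff_null_sets) auto
    thus False using ab by auto
  qed
  show ?thesis
  proof (rule that)
    show "0 \<le> C0" unfolding C0_def by simp
    show "\<And>a b. 0 \<le> a \<Longrightarrow> a < b \<Longrightarrow> w_meas w a b < \<infinity>" using fin by blast
    fix a b :: real assume ab: "0 \<le> a" "a < b"
    define W where "W = enn2real (w_meas w a b)"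
    define m where "m = enn2real (mu_meas lam a b)"
    have m0: "0 < m" unfolding m_def using mu_meas_real[OF ab lam] by simp
    have Wd: "w_meas w a b = ennreal W" unfolding W_def using fin[OF ab] by (simp add: less_top)
    have md: "mu_meas lam a b = ennreal m" unfolding m_def using mu_meas_real[OF ab lam] by simp
    have W0: "0 \<le> W" unfolding W_def by simp
    have q: "w_meas w a b / mu_meas lam a b = ennreal (W/m)" unfolding Wd md using W0 m0 by (simp add: divide_ennreal)
    show "AE x in lborel. x \<in> {a<..<b} \<longrightarrow> enn2real (w_meas w a b) / enn2real (mu_meas lam a b) * x powr (2*lam) \<le> C0 * w x"
      using C[OF ab] wpos
    proof (eventually_elim)
      case (elim x)
      show ?case
      proof
        assume x: "x \<in> {a<..<b}"
        have x0: "0 < x" using x ab by auto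
        have wx: "0 < w x" using elim(2) x0 by simp
        have rx: "0 < x powr (2*lam)" using x0 by simp
        have "ennreal (W/m) \<le> ennreal (C * w x / x powr (2*lam))" using elim(1) x unfolding q by simp
        also have "\<dots> \<le> ennreal (C0 * w x / x powr (2*lam))"
          using wx rx unfolding C0_def by (intro ennreal_leI divide_right_mono mult_right_mono) auto
        finally have "W/m \<le> C0 * w x / x powr (2*lam)"
          using wx rx unfolding C0_def by (subst (asm) ennreal_le_iff) auto
        hence "W/m * x powr (2*lam) \<le> C0 * w x" using rx by (simp add: le_divide_eq)
        thus "enn2real (w_meas w a b) / enn2real (mu_meas lam a b) * x powr (2*lam) \<le> C0 * w x"
          unfolding W_def m_def .
      qed
    qed
  qed
qed

lemma A1_tilde_set_integral_le:
  assumes C: "0 \<le> C" and ab: "0 \<le> a" "a < b" and W: "0 \<le> W" "0 < m"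
    and pt: "AE x in lborel. x \<in> {a<..<b} \<longrightarrow> W / m * x powr (2*lam) \<le> C * w x"
    and w[measurable]: "w \<in> borel_measurable borel"
    and h[measurable]: "h \<in> borel_measurable borel" "\<And>x. 0 \<le> h x"
    and F[measurable]: "F \<in> sets borel" "F \<subseteq> {a<..<b}"
  shows "ennreal (W / m) * (\<integral>\<^sup>+x\<in>F. ennreal (h x * x powr (2*lam)) \<partial>lborel)
    \<le> ennreal C * (\<integral>\<^sup>+x\<in>F. ennreal (h x * w x) \<partial>lborel)"
proof -
  have "ennreal (W / m) * (\<integral>\<^sup>+x\<in>F. ennreal (h x * x powr (2*lam)) \<partial>lborel)
      = (\<integral>\<^sup>+x\<in>F. ennreal (h x * (W / m * x powr (2*lam))) \<partial>lborel)"
    using W h(2) by (subst nn_integral_cmult[symmetric]) (auto intro!: nn_integral_cong simp: ennreal_mult'[symmetric] mult_ac)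
  also have "\<dots> \<le> (\<integral>\<^sup>+x\<in>F. ennreal (h x * (C * w x)) \<partial>lborel)"
  proof (intro nn_integral_mono_AE, use pt in eventually_elim)
    case (elim x)
    show ?case
    proof (cases "x \<in> F")
      case True
      hence "W / m * x powr (2*lam) \<le> C * w x" using elim F(2) by auto
      hence "h x * (W / m * x powr (2*lam)) \<le> h x * (C * w x)" using h(2)[of x] by (rule mult_left_mono)
      thus ?thesis using True by (simp add: ennreal_leI)
    qed simp
  qed
  also have "\<dots> = ennreal C * (\<integral>\<^sup>+x\<in>F. ennreal (h x * w x) \<partial>lborel)"
    using C by (subst nn_integral_cmult[symmetric]) (auto intro!: nn_integral_cong simp: ennreal_mult' mult_ac)
  finally show ?thesis .
qed

lemma A1_tilde_weight_fraction_bound: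
  assumes lam: "0 \<le> lam" and w: "is_weight w" and A1: "A1_tilde lam w"
  obtains C where "0 \<le> C" "\<And>a b. 0 \<le> a \<Longrightarrow> a < b \<Longrightarrow> w_meas w a b < \<infinity>" "weight_fraction_bound lam 1 w C"
proof -
  have wm[measurable]: "w \<in> borel_measurable borel" using w by (rule is_weight_measurable)
  obtain C where C0: "0 \<le> C" and fin: "\<And>a b. 0 \<le> a \<Longrightarrow> a < b \<Longrightarrow> w_meas w a b < \<infinity>"
    and pt: "\<And>a b. 0 \<le> a \<Longrightarrow> a < b \<Longrightarrow> AE x in lborel. x \<in> {a<..<b} \<longrightarrow>
        enn2real (w_meas w a b) / enn2real (mu_meas lam a b) * x powr (2*lam) \<le> C * w x"
    using A1_tilde_pointwise[OF lam w A1] by blast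
  show ?thesis
  proof (rule that[OF C0 fin])
    show "weight_fraction_bound lam 1 w C" unfolding weight_fraction_bound_def
    proof (intro allI impI)
      fix a b :: real and F :: "real set" assume ab: "0 \<le> a" "a < b" and F: "F \<in> sets borel" "F \<subseteq> {a<..<b}"
      define W where "W = enn2real (w_meas w a b)"
      define m where "m = enn2real (mu_meas lam a b)"
      define mF where "mF = enn2real (emeasure (mu_measure lam) F)"
      define WF where "WF = enn2real (emeasure (w_measure w) F)"
      have m0: "0 < m" unfolding m_def using mu_meas_real[OF ab lam] by simp
      have nn: "0 \<le> W" "0 \<le> mF" "0 \<le> WF" unfolding W_def mF_def WF_def by auto
      have "emeasure (w_measure w) F \<le> w_meas w a b"
        unfolding w_meas_eq_emeasure[OF wm] using F by (intro emeasure_mono) auto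
      hence WF: "emeasure (w_measure w) F = ennreal WF"
        using fin[OF ab] unfolding WF_def by (simp add: less_top order.strict_trans1)
      have mF: "emeasure (mu_measure lam) F = ennreal mF"
        using emeasure_mu_finite[OF F(2) ab lam] unfolding mF_def by (simp add: less_top)
      have "ennreal (W / m) * emeasure (mu_measure lam) F \<le> ennreal C * emeasure (w_measure w) F"
        using A1_tilde_set_integral_le[OF C0 ab nn(1) m0 pt[OF ab, folded W_def m_def] wm measurable_const zero_le_one F]
        using F(1) by (simp add: emeasure_mu_measure emeasure_w_measure)
      hence "W / m * mF \<le> C * WF" using nn m0 C0 unfolding WF mF by (simp add: ennreal_mult'[symmetric])
      hence "mF * W \<le> C * WF * m" using m0 by (simp add: field_simps)
      thus "enn2real (emeasure (mu_measure lam) F) powr 1 * enn2real (w_meas w a b)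
        \<le> C * enn2real (emeasure (w_measure w) F) * enn2real (mu_meas lam a b) powr 1"
        using nn m0 unfolding mF_def WF_def W_def m_def by simp
    qed
  qed
qed

definition Ainf_halving :: "real \<Rightarrow> (real \<Rightarrow> real) \<Rightarrow> real \<Rightarrow> bool" where
  "Ainf_halving lam w \<beta>0 \<longleftrightarrow> (\<forall>\<alpha> \<beta> E. 0 \<le> \<alpha> \<longrightarrow> \<alpha> < \<beta> \<longrightarrow> E \<in> sets borel \<longrightarrow> E \<subseteq> {\<alpha><..<\<beta>} \<longrightarrow>
     2 * emeasure (mu_measure lam) E \<le> emeasure (mu_measure lam) {\<alpha><..<\<beta>} \<longrightarrow>
     emeasure (w_measure w) E \<le> ennreal \<beta>0 * emeasure (w_measure w) {\<alpha><..<\<beta>})"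

lemma weight_fraction_bound_imp_Ainf_halving:
  assumes lam: "0 \<le> lam" and r: "1 \<le> r" and C0: "0 \<le> C" and bound: "weight_fraction_bound lam r w C"
    and wm[measurable]: "w \<in> borel_measurable borel"
    and fin: "\<And>a b. 0 \<le> a \<Longrightarrow> a < b \<Longrightarrow> w_meas w a b < \<infinity>"
  obtains \<beta>0 where "0 \<le> \<beta>0" "\<beta>0 < 1" "Ainf_halving lam w \<beta>0"
proof -
  define \<beta>0 where "\<beta>0 = 1 - min ((1/2) powr r / (C + 1)) (1/2)"
  have \<beta>0: "0 \<le> \<beta>0" "\<beta>0 < 1" unfolding \<beta>0_def using C0 by auto
  have "Ainf_halving lam w \<beta>0" unfolding Ainf_halving_def
  proof (intro allI impI)
    fix \<alpha> \<beta> :: real and E :: "real set"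
    assume ab: "0 \<le> \<alpha>" "\<alpha> < \<beta>" and E: "E \<in> sets borel" "E \<subseteq> {\<alpha><..<\<beta>}"
      and half: "2 * emeasure (mu_measure lam) E \<le> emeasure (mu_measure lam) {\<alpha><..<\<beta>}"
    let ?\<mu> = "mu_measure lam" and ?W = "w_measure w" and ?I = "{\<alpha><..<\<beta>}"
    define F where "F = ?I - E"
    have F: "F \<in> sets borel" "F \<subseteq> ?I" "?I = E \<union> F" "E \<inter> F = {}" unfolding F_def using E by auto
    have \<mu>_fin: "emeasure ?\<mu> A \<noteq> \<infinity>" if "A \<subseteq> ?I" for A
      using emeasure_mu_finite[OF that ab lam] by simp
    have W_fin: "emeasure ?W A \<noteq> \<infinity>" if "A \<subseteq> ?I" "A \<in> sets borel" for A
      using emeasure_mono[of A ?I ?W] that fin[OF ab] by (auto simp: w_meas_eq_emeasure top_unique)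
    have \<mu>_add: "measure ?\<mu> ?I = measure ?\<mu> E + measure ?\<mu> F"
      using F E \<mu>_fin by (simp add: measure_Union)
    have W_add: "measure ?W ?I = measure ?W E + measure ?W F"
      using F E W_fin by (simp add: measure_Union)
    have "ennreal (2 * measure ?\<mu> E) \<le> ennreal (measure ?\<mu> ?I)"
      using half \<mu>_fin[OF E(2)] \<mu>_fin[of ?I] by (simp add: emeasure_eq_ennreal_measure ennreal_mult)
    hence "2 * measure ?\<mu> E \<le> measure ?\<mu> ?I" by (simp add: ennreal_le_iff)
    moreover have "0 < measure ?\<mu> ?I"
      using mu_meas_real[OF ab lam] by (simp add: measure_def mu_meas_eq_emeasure)
    moreover have "measure ?\<mu> F powr r * measure ?W ?I \<le> C * measure ?W F * measure ?\<mu> ?I powr r"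
      using bound F(1,2) ab unfolding weight_fraction_bound_def measure_def
      by (simp add: w_meas_eq_emeasure[OF wm] mu_meas_eq_emeasure)
    ultimately have "measure ?W E \<le> \<beta>0 * measure ?W ?I"
      unfolding \<beta>0_def \<mu>_add W_add by (intro fraction_bound_imp_halving r C0) auto
    thus "emeasure ?W E \<le> ennreal \<beta>0 * emeasure ?W ?I"
      using W_fin[OF E(2,1)] W_fin[of ?I] \<beta>0(1)
      by (simp add: emeasure_eq_ennreal_measure ennreal_mult'[symmetric] ennreal_leI)
  qed
  with \<beta>0 show ?thesis by (rule that)
qed

lemma Ainf_tilde_imp_Ainf_halving:
  assumes lam: "0 \<le> lam" and w: "is_weight w" and A: "Ainf_tilde lam w"
  obtains \<beta>0 where "0 \<le> \<beta>0" "\<beta>0 < 1" "\<And>a b. 0 \<le> a \<Longrightarrow> a < b \<Longrightarrow> w_meas w a b < \<infinity>"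
    "Ainf_halving lam w \<beta>0"
proof -
  have wm: "w \<in> borel_measurable borel" using w by (rule is_weight_measurable)
  from A obtain r where r: "1 \<le> r" "A_tilde lam r w" unfolding Ainf_tilde_def by blast
  obtain C where C: "0 \<le> C" "\<And>a b. 0 \<le> a \<Longrightarrow> a < b \<Longrightarrow> w_meas w a b < \<infinity>" "weight_fraction_bound lam r w C"
  proof (cases "r = 1")
    case True
    hence "A1_tilde lam w" using r(2) unfolding A_tilde_def by simp
    from A1_tilde_weight_fraction_bound[OF lam w this] show ?thesis using that True by blast
  next
    case False
    hence "Ap_tilde lam r w" "1 < r" using r unfolding A_tilde_def by auto
    from Ap_tilde_weight_fraction_bound[OF lam this(2) w this(1)] show ?thesis using that by blast
  qed
  from weight_fraction_bound_imp_Ainf_halving[OF lam r(1) C(1) C(3) wm C(2)] show ?thesis using that C(2) by blast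
qed

section \<open>The weighted John--Nirenberg inequality\<close>

locale bmo_Ainf =
  fixes lam :: real and f :: "real \<Rightarrow> real" and N :: real and w :: "real \<Rightarrow> real" and \<beta>0 :: real
  assumes lam: "0 \<le> lam"
    and f_borel[measurable]: "f \<in> borel_measurable borel"
    and w_borel[measurable]: "w \<in> borel_measurable borel"
    and f_integrable: "\<And>\<alpha> \<beta>. 0 \<le> \<alpha> \<Longrightarrow> \<alpha> < \<beta> \<Longrightarrow> set_integrable lborel {\<alpha><..<\<beta>} (\<lambda>t. f t * t powr (2*lam))"
    and mean_oscillation: "\<And>\<alpha> \<beta>. 0 \<le> \<alpha> \<Longrightarrow> \<alpha> < \<beta> \<Longrightarrow>
       (\<integral>\<^sup>+t\<in>{\<alpha><..<\<beta>}. ennreal (\<bar>f t - mu_avg lam f \<alpha> \<beta>\<bar> * t powr (2*lam)) \<partial>lborel) \<le> ennreal N * mu_meas lam \<alpha> \<beta>"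
    and N: "0 < N"
    and \<beta>0: "0 \<le> \<beta>0" "\<beta>0 < 1"
    and weight_halving: "Ainf_halving lam w \<beta>0"
begin

definition jn_const :: real where "jn_const = N * (3 + 2 * doubling_const lam)"

definition level_set :: "real \<Rightarrow> real \<Rightarrow> real \<Rightarrow> real set" where
  "level_set s \<alpha> \<beta> = {x\<in>{\<alpha><..<\<beta>}. s < \<bar>f x - mu_avg lam f \<alpha> \<beta>\<bar>}"

definition cz_family :: "real \<Rightarrow> real \<Rightarrow> (nat \<times> nat) set" where
  "cz_family \<alpha> \<beta> = maximal_dyadic (cz_selected lam (\<lambda>x. \<bar>f x - mu_avg lam f \<alpha> \<beta>\<bar>) N \<alpha> \<beta>)"

lemma level_set_borel[measurable]: "level_set s \<alpha> \<beta> \<in> sets borel"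
  unfolding level_set_def by measurable

lemma oscillation_borel[measurable]: "(\<lambda>x. \<bar>f x - c\<bar>) \<in> borel_measurable borel"
  by measurable

lemma jn_const_ge: "3 * N \<le> jn_const" "0 < jn_const"
proof -
  have "0 < N * doubling_const lam" using N doubling_const_ge_1[OF lam] by simp
  moreover have "jn_const = 3*N + 2*(N*doubling_const lam)" unfolding jn_const_def by (simp add: algebra_simps)
  ultimately show "3 * N \<le> jn_const" "0 < jn_const" using N by linarith+
qed

lemma mean_oscillation_mu_measure:
  assumes "0 \<le> \<alpha>" "\<alpha> < \<beta>"
  shows "(\<integral>\<^sup>+x\<in>{\<alpha><..<\<beta>}. ennreal \<bar>f x - mu_avg lam f \<alpha> \<beta>\<bar> \<partial>mu_measure lam)
    \<le> ennreal N * emeasure (mu_measure lam) {\<alpha><..<\<beta>}"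
  using mean_oscillation[OF assms] nn_set_integral_mu_measure[OF oscillation_borel abs_ge_zero, of "{\<alpha><..<\<beta>}" lam]
  by (simp add: mu_meas_eq_emeasure)

lemma cz_family_mean_close:
  assumes ab: "0 \<le> \<alpha>" "\<alpha> < \<beta>" and i: "i \<in> cz_family \<alpha> \<beta>"
  defines "u \<equiv> dyadic_left \<alpha> \<beta> (fst i) (snd i)" and "v \<equiv> dyadic_left \<alpha> \<beta> (fst i) (Suc (snd i))"
  shows "\<bar>mu_avg lam f u v - mu_avg lam f \<alpha> \<beta>\<bar> \<le> 2 * N * doubling_const lam"
proof -
  have uv: "0 \<le> u" "u < v" "dyadic_Ioo \<alpha> \<beta> (fst i) (snd i) = {u<..<v}"
    using order_trans[OF ab(1) dyadic_left_ge] dyadic_left_less[OF ab(2)] ab(2)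
    unfolding u_def v_def dyadic_Ioo_eq by auto
  have "(\<integral>\<^sup>+t\<in>{u<..<v}. ennreal (\<bar>f t - mu_avg lam f \<alpha> \<beta>\<bar> * t powr (2*lam)) \<partial>lborel)
      = (\<integral>\<^sup>+x\<in>{u<..<v}. ennreal \<bar>f x - mu_avg lam f \<alpha> \<beta>\<bar> \<partial>mu_measure lam)"
    using nn_set_integral_mu_measure[OF oscillation_borel abs_ge_zero, of "{u<..<v}" lam] by simp
  also have "\<dots> \<le> ennreal (2 * N * doubling_const lam) * mu_meas lam u v"
    using cz_selected_mean[OF ab lam N oscillation_borel mean_oscillation_mu_measure[OF ab] i[unfolded cz_family_def]]
    by (simp add: uv(3) mu_meas_eq_emeasure)
  finally show ?thesis
    using N doubling_const_ge_1[OF lam] by (intro mu_avg_dist_le[OF uv(1,2) lam f_integrable[OF uv(1,2)]]) auto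
qed

text \<open>Inside a selected interval the oscillation about the parent mean exceeds the one about
  the child mean by at most \<open>2 N D\<close>, and off the selected intervals it is at most \<open>3 N\<close>
  almost everywhere; \<open>jn_const\<close> dominates both.\<close>

lemma level_set_Suc_subset:
  assumes ab: "0 \<le> \<alpha>" "\<alpha> < \<beta>"
  shows "level_set (jn_const * Suc k) \<alpha> \<beta>
    \<subseteq> ({x\<in>{\<alpha><..<\<beta>}. 3*N < \<bar>f x - mu_avg lam f \<alpha> \<beta>\<bar>} - (\<Union>i\<in>cz_family \<alpha> \<beta>. dyadic_Ioo \<alpha> \<beta> (fst i) (snd i)))
       \<union> (\<Union>i\<in>cz_family \<alpha> \<beta>. level_set (jn_const * k)
            (dyadic_left \<alpha> \<beta> (fst i) (snd i)) (dyadic_left \<alpha> \<beta> (fst i) (Suc (snd i))))"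
proof
  fix x assume x: "x \<in> level_set (jn_const * Suc k) \<alpha> \<beta>"
  have "jn_const \<le> jn_const * Suc k" using jn_const_ge by simp
  moreover have "jn_const * Suc k < \<bar>f x - mu_avg lam f \<alpha> \<beta>\<bar>" using x unfolding level_set_def by blast
  ultimately have big: "3*N < \<bar>f x - mu_avg lam f \<alpha> \<beta>\<bar>" using jn_const_ge by linarith
  show "x \<in> ({x\<in>{\<alpha><..<\<beta>}. 3*N < \<bar>f x - mu_avg lam f \<alpha> \<beta>\<bar>} - (\<Union>i\<in>cz_family \<alpha> \<beta>. dyadic_Ioo \<alpha> \<beta> (fst i) (snd i)))
       \<union> (\<Union>i\<in>cz_family \<alpha> \<beta>. level_set (jn_const * k)
            (dyadic_left \<alpha> \<beta> (fst i) (snd i)) (dyadic_left \<alpha> \<beta> (fst i) (Suc (snd i))))"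
  proof (cases "x \<in> (\<Union>i\<in>cz_family \<alpha> \<beta>. dyadic_Ioo \<alpha> \<beta> (fst i) (snd i))")
    case False thus ?thesis using x big unfolding level_set_def by auto
  next
    case True
    then obtain i where i: "i \<in> cz_family \<alpha> \<beta>" "x \<in> dyadic_Ioo \<alpha> \<beta> (fst i) (snd i)" by auto
    have "jn_const * k + 2 * N * doubling_const lam < jn_const * Suc k"
      using N unfolding jn_const_def by (simp add: algebra_simps)
    moreover have "jn_const * Suc k < \<bar>f x - mu_avg lam f \<alpha> \<beta>\<bar>" using x unfolding level_set_def by simp
    ultimately have "x \<in> level_set (jn_const * k) (dyadic_left \<alpha> \<beta> (fst i) (snd i)) (dyadic_left \<alpha> \<beta> (fst i) (Suc (snd i)))"
      using i(2) cz_family_mean_close[OF ab i(1)] unfolding level_set_def dyadic_Ioo_eq by auto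
    thus ?thesis using i(1) by blast
  qed
qed

text \<open>Up to a null set, each level set lies in the selected intervals of the previous level,
  which cover at most half of \<open>\<mu>(I)\<close> and hence at most the fraction \<open>\<beta>0\<close> of \<open>w(I)\<close>.\<close>

lemma john_nirenberg:
  assumes "0 \<le> \<alpha>" "\<alpha> < \<beta>"
  shows "emeasure (w_measure w) (level_set (jn_const * k) \<alpha> \<beta>) \<le> ennreal (\<beta>0^k) * emeasure (w_measure w) {\<alpha><..<\<beta>}"
  using assms
proof (induction k arbitrary: \<alpha> \<beta>)
  case 0
  show ?case by (simp, intro emeasure_mono) (auto simp: level_set_def)
next
  case (Suc k)
  note ab = Suc.prems
  let ?W = "w_measure w" and ?M = "cz_family \<alpha> \<beta>"
  let ?D = "\<lambda>i. dyadic_Ioo \<alpha> \<beta> (fst i) (snd i)"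
  let ?u = "\<lambda>i. dyadic_left \<alpha> \<beta> (fst i) (snd i)" and ?v = "\<lambda>i. dyadic_left \<alpha> \<beta> (fst i) (Suc (snd i))"
  let ?E = "{x\<in>{\<alpha><..<\<beta>}. 3*N < \<bar>f x - mu_avg lam f \<alpha> \<beta>\<bar>} - (\<Union>i\<in>?M. ?D i)"
  note cz = ab lam N oscillation_borel mean_oscillation_mu_measure[OF ab]
  have disj: "disjoint_family_on (\<lambda>i. level_set (jn_const * k) (?u i) (?v i)) ?M"
    using disjoint_family_maximal_dyadic[OF ab(2), where P="cz_selected lam (\<lambda>x. \<bar>f x - mu_avg lam f \<alpha> \<beta>\<bar>) N \<alpha> \<beta>"]
    unfolding cz_family_def disjoint_family_on_def level_set_def dyadic_Ioo_eq by blast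
  have L_borel: "(\<Union>i\<in>?M. level_set (jn_const * k) (?u i) (?v i)) \<in> sets borel"
    unfolding cz_family_def by (intro sets.countable_UN'' countable_maximal_dyadic) (simp add: level_set_borel)
  have E_null: "?E \<in> null_sets ?W"
    using null_sets_w_measure[OF w_borel cz_exceptional_null[OF cz]] unfolding cz_family_def .
  have "emeasure ?W (level_set (jn_const * Suc k) \<alpha> \<beta>) \<le> emeasure ?W (?E \<union> (\<Union>i\<in>?M. level_set (jn_const * k) (?u i) (?v i)))"
    using level_set_Suc_subset[OF ab] L_borel E_null by (intro emeasure_mono) auto
  also have "\<dots> = emeasure ?W (\<Union>i\<in>?M. level_set (jn_const * k) (?u i) (?v i))"
    using L_borel E_null by (subst Un_commute, intro emeasure_Un_null_set) auto
  also have "\<dots> = (\<integral>\<^sup>+i. emeasure ?W (level_set (jn_const * k) (?u i) (?v i)) \<partial>count_space ?M)"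
    using disj countable_maximal_dyadic unfolding cz_family_def by (intro emeasure_UN_countable) auto
  also have "\<dots> \<le> (\<integral>\<^sup>+i. ennreal (\<beta>0^k) * emeasure ?W (?D i) \<partial>count_space ?M)"
  proof (intro nn_integral_mono)
    fix i
    have "0 \<le> ?u i" "?u i < ?v i" using order_trans[OF ab(1) dyadic_left_ge] dyadic_left_less[OF ab(2)] ab(2) by auto
    thus "emeasure ?W (level_set (jn_const * k) (?u i) (?v i)) \<le> ennreal (\<beta>0^k) * emeasure ?W (?D i)"
      unfolding dyadic_Ioo_eq by (rule Suc.IH)
  qed
  also have "\<dots> = ennreal (\<beta>0^k) * emeasure ?W (\<Union>i\<in>?M. ?D i)"
    unfolding cz_family_def by (simp add: emeasure_UN_maximal_dyadic[OF ab(2)] nn_integral_cmult)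
  also have "\<dots> \<le> ennreal (\<beta>0^k) * (ennreal \<beta>0 * emeasure ?W {\<alpha><..<\<beta>})"
    using weight_halving[unfolded Ainf_halving_def, rule_format, OF ab UN_maximal_dyadic_borel UN_maximal_dyadic_subset[OF ab(2)] cz_selected_measure[OF cz]]
    unfolding cz_family_def by (intro mult_left_mono) auto
  also have "\<dots> = ennreal (\<beta>0^Suc k) * emeasure ?W {\<alpha><..<\<beta>}"
    using \<beta>0 by (simp add: ennreal_mult mult_ac)
  finally show ?case .
qed


lemma john_nirenberg_Lp:
  assumes ab: "0 \<le> \<alpha>" "\<alpha> < \<beta>" and p: "0 < p"
  shows "(\<integral>\<^sup>+x\<in>{\<alpha><..<\<beta>}. ennreal (\<bar>f x - mu_avg lam f \<alpha> \<beta>\<bar> powr p * w x) \<partial>lborel)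
     \<le> ennreal (jn_const powr p * poly_geom_sum \<beta>0 p) * emeasure (w_measure w) {\<alpha><..<\<beta>}"
proof -
  let ?W = "w_measure w" and ?I = "{\<alpha><..<\<beta>}"
  let ?a = "\<lambda>k. jn_const powr p * ((real k + 1) powr p * \<beta>0^k)"
  have summ: "summable (\<lambda>k. (real k + 1) powr p * \<beta>0^k)" using summable_powr_times_power[OF \<beta>0] .
  have "(\<integral>\<^sup>+x\<in>?I. ennreal (\<bar>f x - mu_avg lam f \<alpha> \<beta>\<bar> powr p * w x) \<partial>lborel)
      = (\<integral>\<^sup>+x. ennreal (\<bar>f x - mu_avg lam f \<alpha> \<beta>\<bar> powr p) * indicator ?I x \<partial>?W)"
    unfolding w_measure_def by (subst nn_integral_density) (auto intro!: nn_integral_cong simp: ennreal_mult'' mult_ac)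
  also have "\<dots> \<le> (\<Sum>k. ennreal (jn_const powr p * (real k + 1) powr p) * emeasure ?W (level_set (jn_const * real k) \<alpha> \<beta>))"
    using nn_integral_powr_le_layer_sum[OF jn_const_ge(2) p _ abs_ge_zero, of "\<lambda>x. f x - mu_avg lam f \<alpha> \<beta>" ?W ?I]
    unfolding level_set_def by simp
  also have "\<dots> \<le> (\<Sum>k. ennreal (?a k) * emeasure ?W ?I)"
  proof (intro suminf_le allI)
    fix k
    have "ennreal (jn_const powr p * (real k + 1) powr p) * emeasure ?W (level_set (jn_const * real k) \<alpha> \<beta>)
        \<le> ennreal (jn_const powr p * (real k + 1) powr p) * (ennreal (\<beta>0^k) * emeasure ?W ?I)"
      using john_nirenberg[OF ab, of k] by (rule mult_left_mono) simp
    thus "ennreal (jn_const powr p * (real k + 1) powr p) * emeasure ?W (level_set (jn_const * real k) \<alpha> \<beta>)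
        \<le> ennreal (?a k) * emeasure ?W ?I"
      using \<beta>0 by (simp add: ennreal_mult mult_ac)
  qed (auto intro: summableI)
  also have "\<dots> = ennreal (\<Sum>k. ?a k) * emeasure ?W ?I"
    using summ \<beta>0 by (subst suminf_ennreal2[symmetric]) (auto intro: summable_mult)
  also have "(\<Sum>k. ?a k) = jn_const powr p * poly_geom_sum \<beta>0 p"
    unfolding poly_geom_sum_def using summ by (rule suminf_mult)
  finally show ?thesis .
qed


lemma set_integrable_times_weight:
  assumes ab: "0 \<le> a" "a < b" and wpos: "AE t in lborel. 0 < t \<longrightarrow> 0 < w t"
    and fin: "w_meas w a b < \<infinity>"
  shows "set_integrable lborel {a<..<b} (\<lambda>t. f t * w t)"
  unfolding set_integrable_def
proof (rule integrableI_bounded)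
  define c where "c = mu_avg lam f a b"
  define I where "I = {a<..<b}"
  show "(\<lambda>x. indicator {a<..<b} x *\<^sub>R (f x * w x)) \<in> borel_measurable lborel" by measurable
  have WI: "emeasure (w_measure w) I < \<infinity>" using fin unfolding I_def by (simp add: w_meas_eq_emeasure)
  have X1: "(\<integral>\<^sup>+x\<in>I. ennreal (\<bar>f x - c\<bar> powr 1 * w x) \<partial>lborel)
     \<le> ennreal (jn_const powr 1 * poly_geom_sum \<beta>0 1) * emeasure (w_measure w) I"
    using john_nirenberg_Lp[OF ab zero_less_one] unfolding I_def c_def .
  have "(\<integral>\<^sup>+x. ennreal (norm (indicator {a<..<b} x *\<^sub>R (f x * w x))) \<partial>lborel)
     \<le> (\<integral>\<^sup>+x. ennreal (\<bar>f x - c\<bar> powr 1 * w x) * indicator I x + ennreal \<bar>c\<bar> * (ennreal (w x) * indicator I x) \<partial>lborel)"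
  proof (intro nn_integral_mono_AE)
    show "AE x in lborel. ennreal (norm (indicator {a<..<b} x *\<^sub>R (f x * w x)))
        \<le> ennreal (\<bar>f x - c\<bar> powr 1 * w x) * indicator I x + ennreal \<bar>c\<bar> * (ennreal (w x) * indicator I x)"
      using wpos
    proof eventually_elim
      case (elim x)
      show ?case
      proof (cases "x \<in> I")
        case True
        hence "0 < x" unfolding I_def using ab by auto
        hence wx: "0 < w x" using elim by simp
        have "\<bar>f x\<bar> \<le> \<bar>f x - c\<bar> + \<bar>c\<bar>" using abs_triangle_ineq[of "f x - c" c] by simp
        hence "\<bar>f x\<bar> * w x \<le> (\<bar>f x - c\<bar> + \<bar>c\<bar>) * w x" using wx by (intro mult_right_mono) auto
        hence "\<bar>f x * w x\<bar> \<le> \<bar>f x - c\<bar> * w x + \<bar>c\<bar> * w x" using wx by (simp add: abs_mult distrib_right)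
        hence "ennreal \<bar>f x * w x\<bar> \<le> ennreal (\<bar>f x - c\<bar> * w x) + ennreal \<bar>c\<bar> * ennreal (w x)"
          using wx by (simp add: ennreal_mult[symmetric] ennreal_plus[symmetric] del: ennreal_plus)
        thus ?thesis using True by (simp add: I_def)
      qed (simp add: I_def)
    qed
  qed
  also have "\<dots> = (\<integral>\<^sup>+x\<in>I. ennreal (\<bar>f x - c\<bar> powr 1 * w x) \<partial>lborel) + ennreal \<bar>c\<bar> * emeasure (w_measure w) I"
    unfolding w_measure_def I_def by (subst nn_integral_add) (auto simp: nn_integral_cmult emeasure_density)
  also have "\<dots> < \<infinity>" using X1 WI by (simp add: ennreal_mult_less_top le_less_trans)
  finally show "(\<integral>\<^sup>+x. ennreal (norm (indicator {a<..<b} x *\<^sub>R (f x * w x))) \<partial>lborel) < \<infinity>" .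
qed

lemma Lpw_mean_oscillation_bound:
  assumes ab: "0 \<le> a" "a < b" and p: "0 < p" and fin: "w_meas w a b < \<infinity>"
  shows "epowr ((\<integral>\<^sup>+ t\<in>{a<..<b}. ennreal (\<bar>f t - mu_avg lam f a b\<bar> powr p * w t) \<partial>lborel) / w_meas w a b) (1/p)
    \<le> ennreal (jn_const * poly_geom_sum \<beta>0 p powr (1/p))"
proof -
  have S0: "0 \<le> poly_geom_sum \<beta>0 p" using poly_geom_sum_ge_1[OF \<beta>0, of p] by simp
  have K0: "0 \<le> jn_const powr p * poly_geom_sum \<beta>0 p" using S0 by simp
  have "(\<integral>\<^sup>+ t\<in>{a<..<b}. ennreal (\<bar>f t - mu_avg lam f a b\<bar> powr p * w t) \<partial>lborel) / w_meas w a b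
     \<le> ennreal (jn_const powr p * poly_geom_sum \<beta>0 p)"
    using john_nirenberg_Lp[OF ab p] fin K0 unfolding w_meas_eq_emeasure[OF w_borel] by (intro ennreal_divide_le_const) auto
  hence "epowr ((\<integral>\<^sup>+ t\<in>{a<..<b}. ennreal (\<bar>f t - mu_avg lam f a b\<bar> powr p * w t) \<partial>lborel) / w_meas w a b) (1/p)
    \<le> ennreal ((jn_const powr p * poly_geom_sum \<beta>0 p) powr (1/p))"
    using K0 p by (rule epowr_le)
  also have "(jn_const powr p * poly_geom_sum \<beta>0 p) powr (1/p) = jn_const * poly_geom_sum \<beta>0 p powr (1/p)"
    using jn_const_ge(2) p by (simp add: powr_mult powr_powr)
  finally show ?thesis .
qed

lemma bmo_Lpw_norm_le:
  assumes p: "0 < p" and fin: "\<And>a b. 0 \<le> a \<Longrightarrow> a < b \<Longrightarrow> w_meas w a b < \<infinity>"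
  shows "bmo_Lpw_norm lam p w f \<le> ennreal (jn_const * poly_geom_sum \<beta>0 p powr (1/p))"
  unfolding bmo_Lpw_norm_def
  by (intro SUP_least) (auto intro!: Lpw_mean_oscillation_bound p fin)

end

section \<open>Part (a): \<open>BMO_delta\<close> embeds into \<open>BMO_Lpw\<close>\<close>

lemma mean_oscillation_le_bmo_delta_norm:
  assumes "0 \<le> a" "a < b"
  shows "(\<integral>\<^sup>+ t\<in>{a<..<b}. ennreal (\<bar>f t - mu_avg lam f a b\<bar> * t powr (2*lam)) \<partial>lborel) / mu_meas lam a b
     \<le> bmo_delta_norm lam f"
  unfolding bmo_delta_norm_def using assms
  by (intro SUP_upper2[where i="(a,b)"]) auto

lemma mean_oscillation_le_bmo_Lpw_norm:
  assumes "0 \<le> a" "a < b"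
  shows "epowr ((\<integral>\<^sup>+ t\<in>{a<..<b}. ennreal (\<bar>f t - mu_avg lam f a b\<bar> powr p * w t) \<partial>lborel) / w_meas w a b) (1/p)
     \<le> bmo_Lpw_norm lam p w f"
  unfolding bmo_Lpw_norm_def using assms
  by (intro SUP_upper2[where i="(a,b)"]) auto

lemma set_integrable_of_oscillation_finite:
  assumes lam: "0 \<le> lam" and bm[measurable]: "f \<in> borel_measurable borel" and ab: "0 \<le> \<alpha>" "\<alpha> < \<beta>"
    and fin: "(\<integral>\<^sup>+ t\<in>{\<alpha><..<\<beta>}. ennreal (\<bar>f t - c\<bar> * t powr (2*lam)) \<partial>lborel) < \<infinity>"
  shows "set_integrable lborel {\<alpha><..<\<beta>} (\<lambda>t. f t * t powr (2*lam))"
  unfolding set_integrable_def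
proof (rule integrableI_bounded)
  show "(\<lambda>x. indicator {\<alpha><..<\<beta>} x *\<^sub>R (f x * x powr (2*lam))) \<in> borel_measurable lborel" by measurable
  have "(\<integral>\<^sup>+x. ennreal (norm (indicator {\<alpha><..<\<beta>} x *\<^sub>R (f x * x powr (2*lam)))) \<partial>lborel)
      \<le> (\<integral>\<^sup>+x. ennreal (\<bar>f x - c\<bar> * x powr (2*lam)) * indicator {\<alpha><..<\<beta>} x + ennreal \<bar>c\<bar> * (ennreal (x powr (2*lam)) * indicator {\<alpha><..<\<beta>} x) \<partial>lborel)"
  proof (intro nn_integral_mono)
    fix x
    have "\<bar>f x\<bar> \<le> \<bar>f x - c\<bar> + \<bar>c\<bar>" using abs_triangle_ineq[of "f x - c" c] by simp
    hence "\<bar>f x\<bar> * x powr (2*lam) \<le> (\<bar>f x - c\<bar> + \<bar>c\<bar>) * x powr (2*lam)"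
      by (rule mult_right_mono) simp
    hence "\<bar>f x\<bar> * x powr (2*lam) \<le> \<bar>f x - c\<bar> * x powr (2*lam) + \<bar>c\<bar> * x powr (2*lam)"
      by (simp add: distrib_right)
    hence "ennreal (\<bar>f x\<bar> * x powr (2*lam)) \<le> ennreal (\<bar>f x - c\<bar> * x powr (2*lam)) + ennreal \<bar>c\<bar> * ennreal (x powr (2*lam))"
      by (simp add: ennreal_mult[symmetric] ennreal_plus[symmetric] del: ennreal_plus)
    thus "ennreal (norm (indicator {\<alpha><..<\<beta>} x *\<^sub>R (f x * x powr (2*lam))))
      \<le> ennreal (\<bar>f x - c\<bar> * x powr (2*lam)) * indicator {\<alpha><..<\<beta>} x + ennreal \<bar>c\<bar> * (ennreal (x powr (2*lam)) * indicator {\<alpha><..<\<beta>} x)"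
      by (cases "x \<in> {\<alpha><..<\<beta>}") (auto simp: abs_mult)
  qed
  also have "\<dots> = (\<integral>\<^sup>+ t\<in>{\<alpha><..<\<beta>}. ennreal (\<bar>f t - c\<bar> * t powr (2*lam)) \<partial>lborel) + ennreal \<bar>c\<bar> * mu_meas lam \<alpha> \<beta>"
    unfolding mu_meas_def by (subst nn_integral_add) (auto simp: nn_integral_cmult)
  also have "\<dots> < \<infinity>" using fin mu_meas_finite[OF ab lam] by (simp add: ennreal_mult_less_top)
  finally show "(\<integral>\<^sup>+x. ennreal (norm (indicator {\<alpha><..<\<beta>} x *\<^sub>R (f x * x powr (2*lam)))) \<partial>lborel) < \<infinity>" .
qed

lemma mean_oscillation_finite:
  assumes lam: "0 \<le> lam" and ab: "0 \<le> a" "a < b" and N: "bmo_delta_norm lam f < \<infinity>"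
  shows "(\<integral>\<^sup>+ t\<in>{a<..<b}. ennreal (\<bar>f t - mu_avg lam f a b\<bar> * t powr (2*lam)) \<partial>lborel) < \<infinity>"
proof (rule ccontr)
  assume "\<not> ?thesis"
  hence top: "(\<integral>\<^sup>+ t\<in>{a<..<b}. ennreal (\<bar>f t - mu_avg lam f a b\<bar> * t powr (2*lam)) \<partial>lborel) = \<infinity>"
    by (simp add: not_less top_unique)
  have "mu_meas lam a b \<noteq> \<infinity>" using mu_meas_finite[OF ab lam] by simp
  hence "\<infinity> \<le> bmo_delta_norm lam f" using mean_oscillation_le_bmo_delta_norm[OF ab, of f lam] top by (simp add: ennreal_top_divide)
  thus False using N by (simp add: top_unique)
qed

lemma bmo_Ainf_of_BMO_delta:
  assumes lam: "0 \<le> lam" and f: "BMO_delta lam f" and w[measurable]: "w \<in> borel_measurable borel"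
    and \<beta>0: "0 \<le> \<beta>0" "\<beta>0 < 1"
    and halving: "Ainf_halving lam w \<beta>0"
    and N: "0 < N" "bmo_delta_norm lam f \<le> ennreal N"
  shows "bmo_Ainf lam f N w \<beta>0"
proof
  show f_borel: "f \<in> borel_measurable borel" using f unfolding BMO_delta_def by simp
  have norm_fin: "bmo_delta_norm lam f < \<infinity>" using f unfolding BMO_delta_def by simp
  show "set_integrable lborel {\<alpha><..<\<beta>} (\<lambda>t. f t * t powr (2*lam))" if "0 \<le> \<alpha>" "\<alpha> < \<beta>" for \<alpha> \<beta>
    using set_integrable_of_oscillation_finite[OF lam f_borel that mean_oscillation_finite[OF lam that norm_fin]] .
  show "(\<integral>\<^sup>+ t\<in>{\<alpha><..<\<beta>}. ennreal (\<bar>f t - mu_avg lam f \<alpha> \<beta>\<bar> * t powr (2*lam)) \<partial>lborel) \<le> ennreal N * mu_meas lam \<alpha> \<beta>"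
    if ab: "0 \<le> \<alpha>" "\<alpha> < \<beta>" for \<alpha> \<beta>
    using order_trans[OF mean_oscillation_le_bmo_delta_norm[OF ab] N(2)] mu_meas_pos[OF ab lam] mu_meas_finite[OF ab lam]
    by (intro ennreal_le_times_of_divide_le) auto
qed (use lam w N \<beta>0 halving in auto)

lemma BMO_delta_imp_BMO_Lpw:
  assumes lam: "0 < lam" and p: "0 < p" and w: "is_weight w" and A: "Ainf_tilde lam w"
  shows "\<exists>C>0. \<forall>b. BMO_delta lam b \<longrightarrow> BMO_Lpw lam p w b \<and> bmo_Lpw_norm lam p w b \<le> ennreal C * bmo_delta_norm lam b"
proof -
  have lam0: "0 \<le> lam" using lam by simp
  have wm[measurable]: "w \<in> borel_measurable borel" using w by (rule is_weight_measurable)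
  have wpos: "AE t in lborel. 0 < t \<longrightarrow> 0 < w t" using w unfolding is_weight_def by simp
  obtain \<beta>0 where \<beta>0: "0 \<le> \<beta>0" "\<beta>0 < 1" and fin: "\<And>a b. 0 \<le> a \<Longrightarrow> a < b \<Longrightarrow> w_meas w a b < \<infinity>"
    and halving: "Ainf_halving lam w \<beta>0"
    using Ainf_tilde_imp_Ainf_halving[OF lam0 w A] by blast
  define C where "C = (3 + 2 * doubling_const lam) * poly_geom_sum \<beta>0 p powr (1/p)"
  have C: "0 < C" unfolding C_def using poly_geom_sum_ge_1[OF \<beta>0, of p] doubling_const_ge_1[OF lam0]
    by (intro mult_pos_pos) auto
  show ?thesis
  proof (intro exI[of _ C] conjI allI impI C)
    fix f assume f: "BMO_delta lam f"
    have norm_fin: "bmo_delta_norm lam f < \<infinity>" using f unfolding BMO_delta_def by simp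
    have J: "bmo_Ainf lam f N w \<beta>0" if "0 < N" "bmo_delta_norm lam f \<le> ennreal N" for N
      using bmo_Ainf_of_BMO_delta[OF lam0 f wm \<beta>0 halving that] .
    have "bmo_Lpw_norm lam p w f \<le> ennreal (C * N)" if "0 < N" "bmo_delta_norm lam f \<le> ennreal N" for N
      using bmo_Ainf.bmo_Lpw_norm_le[OF J[OF that] p fin] unfolding bmo_Ainf.jn_const_def[OF J[OF that]] C_def
      by (simp add: mult_ac)
    thus norm_le: "bmo_Lpw_norm lam p w f \<le> ennreal C * bmo_delta_norm lam f"
      using norm_fin C by (intro ennreal_le_of_upper_bounds)
    define N where "N = enn2real (bmo_delta_norm lam f) + 1"
    have "bmo_delta_norm lam f = ennreal (enn2real (bmo_delta_norm lam f))" using norm_fin by (simp add: less_top)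
    also have "\<dots> \<le> ennreal N" unfolding N_def by (intro ennreal_leI) simp
    finally have N: "0 < N" "bmo_delta_norm lam f \<le> ennreal N" unfolding N_def by (auto intro: add_nonneg_pos)
    have "set_integrable lborel {a<..<b} (\<lambda>t. f t * w t)" if ab: "0 \<le> a" "a < b" for a b
      using bmo_Ainf.set_integrable_times_weight[OF J[OF N] ab wpos fin[OF ab]] .
    thus "BMO_Lpw lam p w f"
      using f norm_le norm_fin unfolding BMO_Lpw_def BMO_delta_def
      by (auto simp: ennreal_mult_less_top le_less_trans)
  qed
qed

section \<open>Part (b): \<open>BMO_Lpw\<close> embeds into \<open>BMO_delta\<close>\<close>

definition mu_oscillation_bound :: "real \<Rightarrow> real \<Rightarrow> (real \<Rightarrow> real) \<Rightarrow> real \<Rightarrow> bool" where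
  "mu_oscillation_bound lam p w K \<longleftrightarrow> (\<forall>a b c f. 0 \<le> a \<longrightarrow> a < b \<longrightarrow> f \<in> borel_measurable borel \<longrightarrow>
     (\<integral>\<^sup>+t\<in>{a<..<b}. ennreal (\<bar>f t - c\<bar> powr p * w t) \<partial>lborel) < \<infinity> \<longrightarrow>
     (\<integral>\<^sup>+t\<in>{a<..<b}. ennreal (\<bar>f t - c\<bar> * t powr (2*lam)) \<partial>lborel)
       \<le> ennreal (K * enn2real (mu_meas lam a b)) * epowr ((\<integral>\<^sup>+t\<in>{a<..<b}. ennreal (\<bar>f t - c\<bar> powr p * w t) \<partial>lborel) / w_meas w a b) (1/p))"

lemma Ap_tilde_mu_oscillation_bound:
  assumes lam: "0 \<le> lam" and p: "1 < p" and w: "is_weight w" and Ap: "Ap_tilde lam p w"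
  obtains K where "0 < K" "\<And>a b. 0 \<le> a \<Longrightarrow> a < b \<Longrightarrow> w_meas w a b < \<infinity>" "mu_oscillation_bound lam p w K"
proof -
  have wm[measurable]: "w \<in> borel_measurable borel" using w by (rule is_weight_measurable)
  have wpos: "AE t in lborel. 0 < t \<longrightarrow> 0 < w t" using w unfolding is_weight_def by simp
  obtain C where C0: "0 \<le> C" and C: "\<And>a b. 0 \<le> a \<Longrightarrow> a < b \<Longrightarrow> w_meas w a b < \<infinity> \<and> dual_weight_integral lam p w {a<..<b} < \<infinity> \<and>
     enn2real (w_meas w a b) * enn2real (dual_weight_integral lam p w {a<..<b}) powr (p-1) \<le> C * enn2real (mu_meas lam a b) powr p"
    using Ap_tilde_bound[OF lam p Ap] by blast
  define K where "K = C powr (1/p) + 1"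
  show ?thesis
  proof (rule that)
    show "0 < K" unfolding K_def by (simp add: add_nonneg_pos)
    show "\<And>a b. 0 \<le> a \<Longrightarrow> a < b \<Longrightarrow> w_meas w a b < \<infinity>" using C by blast
    show "mu_oscillation_bound lam p w K" unfolding mu_oscillation_bound_def
    proof (intro allI impI)
      fix a b c :: real and f :: "real \<Rightarrow> real"
      assume ab: "0 \<le> a" "a < b" and fm[measurable]: "f \<in> borel_measurable borel"
        and Xfin: "(\<integral>\<^sup>+t\<in>{a<..<b}. ennreal (\<bar>f t - c\<bar> powr p * w t) \<partial>lborel) < \<infinity>"
      define X where "X = (\<integral>\<^sup>+t\<in>{a<..<b}. ennreal (\<bar>f t - c\<bar> powr p * w t) \<partial>lborel)"
      define X' where "X' = enn2real X"
      define W where "W = enn2real (w_meas w a b)"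
      define S where "S = enn2real (dual_weight_integral lam p w {a<..<b})"
      define m where "m = enn2real (mu_meas lam a b)"
      have Ap_ab: "w_meas w a b < \<infinity>" "dual_weight_integral lam p w {a<..<b} < \<infinity>" "W * S powr (p-1) \<le> C * m powr p"
        using C[OF ab] unfolding W_def S_def m_def by auto
      have Wpos: "0 < W" unfolding W_def using w_meas_pos[OF w ab] Ap_ab(1)
        by (simp add: enn2real_positive_iff)
      have m0: "0 < m" unfolding m_def using mu_meas_real[OF ab lam] by simp
      have nn: "0 \<le> X'" "0 \<le> S" unfolding X'_def S_def by auto
      have Ipos: "{a<..<b} \<subseteq> {0<..}" using ab by auto
      have h1: "(\<integral>\<^sup>+x\<in>{a<..<b}. ennreal (\<bar>f x - c\<bar> * x powr (2*lam)) \<partial>lborel)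
         \<le> ennreal (X' powr (1/p) * S powr (1 - 1/p))"
      proof -
        have hm: "(\<lambda>t. \<bar>f t - c\<bar>) \<in> borel_measurable borel" by measurable
        have Is: "{a<..<b} \<in> sets borel" by simp
        show ?thesis
          using Holder_mu_measure[OF p wm wpos hm abs_ge_zero Is Ipos Xfin Ap_ab(2)] unfolding X'_def X_def S_def by simp
      qed
      have "X' powr (1/p) * S powr (1 - 1/p) \<le> C powr (1/p) * m * (X' / W) powr (1/p)"
        using Ap_powr_bound[OF p nn C0 Wpos m0 Ap_ab(3)] .
      also have "\<dots> \<le> K * m * (X' / W) powr (1/p)"
        unfolding K_def using m0 by (intro mult_right_mono) auto
      finally have h2: "X' powr (1/p) * S powr (1 - 1/p) \<le> K * m * (X' / W) powr (1/p)" .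
      have K0: "0 \<le> K * m" unfolding K_def using m0 by simp
      have ep: "epowr (X / w_meas w a b) (1/p) = ennreal ((X' / W) powr (1/p))"
        unfolding X'_def W_def using Xfin w_meas_pos[OF w ab] Ap_ab(1) unfolding X_def by (intro epowr_div_real) auto
      show "(\<integral>\<^sup>+t\<in>{a<..<b}. ennreal (\<bar>f t - c\<bar> * t powr (2*lam)) \<partial>lborel)
       \<le> ennreal (K * enn2real (mu_meas lam a b)) * epowr ((\<integral>\<^sup>+t\<in>{a<..<b}. ennreal (\<bar>f t - c\<bar> powr p * w t) \<partial>lborel) / w_meas w a b) (1/p)"
        unfolding X_def[symmetric] ep m_def[symmetric]
        using h1 h2 K0 by (simp add: ennreal_mult[symmetric] order_trans ennreal_leI)
    qed
  qed
qed

lemma A1_tilde_mu_oscillation_bound: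
  assumes lam: "0 \<le> lam" and w: "is_weight w" and A1: "A1_tilde lam w"
  obtains K where "0 < K" "\<And>a b. 0 \<le> a \<Longrightarrow> a < b \<Longrightarrow> w_meas w a b < \<infinity>" "mu_oscillation_bound lam 1 w K"
proof -
  have wm[measurable]: "w \<in> borel_measurable borel" using w by (rule is_weight_measurable)
  obtain C0 where C0: "0 \<le> C0" and fin: "\<And>a b. 0 \<le> a \<Longrightarrow> a < b \<Longrightarrow> w_meas w a b < \<infinity>"
    and pt: "\<And>a b. 0 \<le> a \<Longrightarrow> a < b \<Longrightarrow> AE x in lborel. x \<in> {a<..<b} \<longrightarrow>
        enn2real (w_meas w a b) / enn2real (mu_meas lam a b) * x powr (2*lam) \<le> C0 * w x"
    using A1_tilde_pointwise[OF lam w A1] by blast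
  define K where "K = C0 + 1"
  show ?thesis
  proof (rule that)
    show "0 < K" unfolding K_def using C0 by simp
    show "\<And>a b. 0 \<le> a \<Longrightarrow> a < b \<Longrightarrow> w_meas w a b < \<infinity>" by (rule fin)
    show "mu_oscillation_bound lam 1 w K" unfolding mu_oscillation_bound_def
    proof (intro allI impI)
      fix a b c :: real and f :: "real \<Rightarrow> real"
      assume ab: "0 \<le> a" "a < b" and fm[measurable]: "f \<in> borel_measurable borel"
        and Xfin: "(\<integral>\<^sup>+t\<in>{a<..<b}. ennreal (\<bar>f t - c\<bar> powr 1 * w t) \<partial>lborel) < \<infinity>"
      define X where "X = (\<integral>\<^sup>+t\<in>{a<..<b}. ennreal (\<bar>f t - c\<bar> powr 1 * w t) \<partial>lborel)"
      define X' where "X' = enn2real X"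
      define W where "W = enn2real (w_meas w a b)"
      define m where "m = enn2real (mu_meas lam a b)"
      have Wpos: "0 < W" unfolding W_def using w_meas_pos[OF w ab] fin[OF ab]
        by (simp add: enn2real_positive_iff)
      have m0: "0 < m" unfolding m_def using mu_meas_real[OF ab lam] by simp
      have Xd: "X = ennreal X'" unfolding X'_def using Xfin unfolding X_def by (simp add: less_top)
      have X'0: "0 \<le> X'" unfolding X'_def by simp
      have "(\<integral>\<^sup>+t\<in>{a<..<b}. ennreal (\<bar>f t - c\<bar> * t powr (2*lam)) \<partial>lborel)
          = ennreal (m / W) * (ennreal (W / m) * (\<integral>\<^sup>+t\<in>{a<..<b}. ennreal (\<bar>f t - c\<bar> * t powr (2*lam)) \<partial>lborel))"
        using m0 Wpos by (simp add: mult.assoc[symmetric] ennreal_mult[symmetric])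
      also have "\<dots> \<le> ennreal (m / W) * (ennreal C0 * X)"
        using A1_tilde_set_integral_le[OF C0 ab less_imp_le[OF Wpos] m0 pt[OF ab, folded W_def m_def] wm _ abs_ge_zero]
        unfolding X_def by (intro mult_left_mono) auto
      also have "\<dots> \<le> ennreal (K * m) * ennreal (X' / W)"
        unfolding Xd K_def using C0 m0 Wpos X'0
        by (simp add: ennreal_mult[symmetric] ennreal_leI mult_right_mono field_simps)
      also have "ennreal (X' / W) = epowr (X / w_meas w a b) (1/1)"
        using epowr_div_real[of X "w_meas w a b" 1] Xfin w_meas_pos[OF w ab] fin[OF ab] X'0 Wpos
        unfolding X_def X'_def W_def by (simp add: powr_one)
      finally show "(\<integral>\<^sup>+t\<in>{a<..<b}. ennreal (\<bar>f t - c\<bar> * t powr (2*lam)) \<partial>lborel)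
       \<le> ennreal (K * enn2real (mu_meas lam a b)) * epowr ((\<integral>\<^sup>+t\<in>{a<..<b}. ennreal (\<bar>f t - c\<bar> powr 1 * w t) \<partial>lborel) / w_meas w a b) (1/1)"
        unfolding X_def m_def .
    qed
  qed
qed

lemma mu_mean_oscillation_le_bmo_Lpw_norm:
  assumes K: "mu_oscillation_bound lam p w K" and ab: "0 \<le> a" "a < b" and fin: "w_meas w a b < \<infinity>"
    and f[measurable]: "f \<in> borel_measurable borel" and norm_fin: "bmo_Lpw_norm lam p w f < \<infinity>"
  shows "(\<integral>\<^sup>+ t\<in>{a<..<b}. ennreal (\<bar>f t - mu_avg lam f a b\<bar> * t powr (2*lam)) \<partial>lborel)
    \<le> ennreal (K * enn2real (mu_meas lam a b)) * bmo_Lpw_norm lam p w f"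
proof -
  define X where "X = (\<integral>\<^sup>+t\<in>{a<..<b}. ennreal (\<bar>f t - mu_avg lam f a b\<bar> powr p * w t) \<partial>lborel)"
  have T: "epowr (X / w_meas w a b) (1/p) \<le> bmo_Lpw_norm lam p w f"
    using mean_oscillation_le_bmo_Lpw_norm[OF ab, of f lam p w] unfolding X_def .
  have "X < \<infinity>"
  proof (rule ccontr)
    assume "\<not> X < \<infinity>"
    hence "epowr (X / w_meas w a b) (1/p) = \<infinity>"
      using fin by (simp add: epowr_def not_less top_unique ennreal_top_divide)
    thus False using T norm_fin by (simp add: top_unique)
  qed
  hence "(\<integral>\<^sup>+t\<in>{a<..<b}. ennreal (\<bar>f t - mu_avg lam f a b\<bar> * t powr (2*lam)) \<partial>lborel)
      \<le> ennreal (K * enn2real (mu_meas lam a b)) * epowr (X / w_meas w a b) (1/p)"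
    using K ab f unfolding mu_oscillation_bound_def X_def by blast
  also have "\<dots> \<le> ennreal (K * enn2real (mu_meas lam a b)) * bmo_Lpw_norm lam p w f"
    using T by (rule mult_left_mono) simp
  finally show ?thesis .
qed

lemma BMO_Lpw_imp_BMO_delta:
  assumes lam: "0 < lam" and p: "1 \<le> p" and w: "is_weight w" and A: "A_tilde lam p w"
  shows "\<exists>C>0. \<forall>b. BMO_Lpw lam p w b \<longrightarrow> BMO_delta lam b \<and> bmo_delta_norm lam b \<le> ennreal C * bmo_Lpw_norm lam p w b"
proof -
  have lam0: "0 \<le> lam" using lam by simp
  obtain K where K: "0 < K" "\<And>a b. 0 \<le> a \<Longrightarrow> a < b \<Longrightarrow> w_meas w a b < \<infinity>" "mu_oscillation_bound lam p w K"
  proof (cases "p = 1")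
    case True
    hence "A1_tilde lam w" using A unfolding A_tilde_def by simp
    from A1_tilde_mu_oscillation_bound[OF lam0 w this] show ?thesis using that True by blast
  next
    case False
    hence "Ap_tilde lam p w" "1 < p" using A p unfolding A_tilde_def by auto
    from Ap_tilde_mu_oscillation_bound[OF lam0 this(2) w this(1)] show ?thesis using that by blast
  qed
  show ?thesis
  proof (intro exI[of _ K] conjI allI impI K(1))
    fix f assume f: "BMO_Lpw lam p w f"
    have f_borel[measurable]: "f \<in> borel_measurable borel" using f unfolding BMO_Lpw_def by simp
    have norm_fin: "bmo_Lpw_norm lam p w f < \<infinity>" using f unfolding BMO_Lpw_def by simp
    note osc = mu_mean_oscillation_le_bmo_Lpw_norm[OF K(3) _ _ K(2) f_borel norm_fin]
    have osc_fin: "(\<integral>\<^sup>+ t\<in>{a<..<b}. ennreal (\<bar>f t - mu_avg lam f a b\<bar> * t powr (2*lam)) \<partial>lborel) < \<infinity>"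
      if "0 \<le> a" "a < b" for a b
      using le_less_trans[OF osc[OF that that]] norm_fin by (simp add: ennreal_mult_less_top)
    show norm_le: "bmo_delta_norm lam f \<le> ennreal K * bmo_Lpw_norm lam p w f"
      unfolding bmo_delta_norm_def
    proof (intro SUP_least)
      fix B :: "real \<times> real" assume "B \<in> {(a,b). 0 \<le> a \<and> a < b}"
      then obtain a b where B: "B = (a,b)" "0 \<le> a" "a < b" by auto
      define m where "m = enn2real (mu_meas lam a b)"
      have m: "mu_meas lam a b = ennreal m" "0 < m" unfolding m_def using mu_meas_real[OF B(2,3) lam0] by auto
      have "(\<integral>\<^sup>+ t\<in>{a<..<b}. ennreal (\<bar>f t - mu_avg lam f a b\<bar> * t powr (2*lam)) \<partial>lborel)
         \<le> ennreal m * (ennreal K * bmo_Lpw_norm lam p w f)"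
        using osc[OF B(2,3) B(2,3)] m K(1) unfolding m_def[symmetric] by (simp add: ennreal_mult mult_ac)
      thus "(\<integral>\<^sup>+ t\<in>{fst B<..<snd B}. ennreal (\<bar>f t - mu_avg lam f (fst B) (snd B)\<bar> * t powr (2*lam)) \<partial>lborel)
          / mu_meas lam (fst B) (snd B) \<le> ennreal K * bmo_Lpw_norm lam p w f"
        unfolding B(1) fst_conv snd_conv m(1) using m(2) by (intro divide_le_posI_ennreal) auto
    qed
    show "BMO_delta lam f" unfolding BMO_delta_def
      using set_integrable_of_oscillation_finite[OF lam0 f_borel _ _ osc_fin] norm_le norm_fin
      by (auto simp: ennreal_mult_less_top le_less_trans)
  qed
qed

theorem lemma7p1:
  fixes lam :: real
  assumes "0 < lam"
  shows "(\<forall>p w. 0 < p \<longrightarrow> is_weight w \<longrightarrow> Ainf_tilde lam w \<longrightarrow>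
            (\<exists>C>0. \<forall>b. BMO_delta lam b \<longrightarrow>
               BMO_Lpw lam p w b \<and> bmo_Lpw_norm lam p w b \<le> ennreal C * bmo_delta_norm lam b))
       \<and> (\<forall>p w. 1 \<le> p \<longrightarrow> is_weight w \<longrightarrow> A_tilde lam p w \<longrightarrow>
            (\<exists>C>0. \<forall>b. BMO_Lpw lam p w b \<longrightarrow>
               BMO_delta lam b \<and> bmo_delta_norm lam b \<le> ennreal C * bmo_Lpw_norm lam p w b))"
  using BMO_delta_imp_BMO_Lpw[OF assms] BMO_Lpw_imp_BMO_delta[OF assms] by blast

end
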